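(* Let $\mathcal{M}$ be a compact metric space and $T:\mathcal{M}\to\mathcal{M}$ a homeomorphism. Let $(\psi_i)_{i\ge1}$ be continuous functions $\mathcal{M}\to\mathbb{C}$ and for each $N$ let $\boldsymbol\psi=[\psi_1,\dots,\psi_N]^\top$ and $\mathcal{F}_N=\mathrm{span}\{\psi_1,\dots,\psi_N\}$. For each $N$ let sample points $x_1,\dots,x_N\in\mathcal{M}$ satisfy $x_{i+1}=T(x_i)$ for $i\in\{1,\dots,N-1\}$, put $y_i=T(x_i)$, assume the matrix $\frac1N\sum_{i=1}^N\boldsymbol\psi(x_i)\boldsymbol\psi(x_i)^{\mathsf H}$ is invertible, let $\hat\mu_N=\frac1N\sum_{i=1}^N\delta_{x_i}$, and let $\mathcal{K}_{N,N}:\mathcal{F}_N\to\mathcal{F}_N$ be the EDMD operator built from these $N$ functions and $N$ samples. Let $(\lambda_N)$ be a bounded sequence with $\lambda_N$ an eigenvalue of $\mathcal{K}_{N,N}$, let $\phi_N\in\mathcal{F}_N$ be an associated eigenfunction with $\|\phi_N\|_{C(\mathcal{M})}=\sup_{x\in\mathcal{M}}|\phi_N(x)|=1$, and let $\nu_N=\phi_N\,d\hat\mu_N$. Then there exist a subsequence $(N_i)_{i=1}^\infty$, complex-valued Borel measures $\nu,\mu$ on $\mathcal{M}$ and $\lambda\in\mathbb{C}$ such that $\nu_{N_i}\to\nu$ and $\hat\mu_{N_i}\to\mu$ weakly, $\lambda_{N_i}\to\lambda$, and \[ \int_{\mathcal{M}}h\circ T^{-1}\,d\nu=\lambda\int_{\mathcal{M}}h\,d\nu\quad\forall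 h\in C(\mathcal{M}). \] In addition, $\mu$ is invariant under $T$, and, assuming the Koopman operator $\mathcal{K}:L_2(\mu)\to L_2(\mu)$, $\mathcal{K}\phi=\phi\circ T$, is bounded with $L_2(\mu)$-adjoint $\mathcal{K}^\star$, \[ \int_{\mathcal{M}}\mathcal{K}^\star h\,d\nu=\lambda\int_{\mathcal{M}}h\,d\nu\quad\forall h\in C(\mathcal{M}). \] Furthermore, if $\lambda\neq0$, then \[ \int_{\mathcal{M}}h\circ T\,d\nu=\frac1\lambda\int_{\mathcal{M}}h\,d\nu\quad\forall h\in C(\mathcal{M}), \] i.e., if nonzero, $\nu$ is an eigenmeasure of the Perron–Frobenius operator $(\mathcal{P}\eta)(A)=\eta(T^{-1}(A))$ with eigenvalue $1/\lambda$.
   Context: EDMD operator: with $\boldsymbol\psi(\boldsymbol X)=[\boldsymbol\psi(x_1),\dots,\boldsymbol\psi(x_N)]$, $\boldsymbol\psi(\boldsymbol Y)=[\boldsymbol\psi(y_1),\dots,\boldsymbol\psi(y_N)]$, set $A=\boldsymbol\psi(\boldsymbol Y)\boldsymbol\psi(\boldsymbol X)^\dagger$ (Moore–Penrose pseudoinverse) and $\mathcal{K}_{N,N}(c^{\mathsf H}\boldsymbol\psi)=c^{\mathsf H}A\boldsymbol\psi$, $c\in\mathbb{C}^N$. $\nu_N=\phi_N\,d\hat\mu_N$ is the measure $h\mapsto\frac1N\sum_{i=1}^N h(x_i)\phi_N(x_i)$. Weak convergence of measures $\eta_i\to\eta$ means $\int f\,d\eta_i\to\int f\,d\eta$ for all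 continuous $f$. $\mu$ is invariant if $\int f\circ T\,d\mu=\int f\,d\mu$ for all continuous $f$. *)

theory Defs
  imports "HOL-Analysis.Analysis"
begin

type_synonym cmat = "nat \<Rightarrow> nat \<Rightarrow> complex"

definition meq :: "nat \<Rightarrow> nat \<Rightarrow> cmat \<Rightarrow> cmat \<Rightarrow> bool" where
  "meq m n A B \<longleftrightarrow> (\<forall>i<m. \<forall>j<n. A i j = B i j)"

definition mmul :: "nat \<Rightarrow> nat \<Rightarrow> nat \<Rightarrow> cmat \<Rightarrow> cmat \<Rightarrow> cmat" where
  "mmul m k n A B = (\<lambda>i j. if i < m \<and> j < n then (\<Sum>l<k. A i l * B l j) else 0)"

definition madj :: "nat \<Rightarrow> nat \<Rightarrow> cmat \<Rightarrow> cmat" where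
  "madj m n A = (\<lambda>i j. if i < n \<and> j < m then cnj (A j i) else 0)"

definition midentity :: cmat where
  "midentity = (\<lambda>i j. if i = j then 1 else 0)"

definition invertible_cmat :: "nat \<Rightarrow> cmat \<Rightarrow> bool" where
  "invertible_cmat n G \<longleftrightarrow>
     (\<exists>B. meq n n (mmul n n n G B) midentity \<and> meq n n (mmul n n n B G) midentity)"

text \<open>Moore--Penrose pseudoinverse of an m x n matrix A (an n x m matrix), via the Penrose
  conditions; unique, normalised to be zero outside its index range.\<close>
definition pinv :: "nat \<Rightarrow> nat \<Rightarrow> cmat \<Rightarrow> cmat" where
  "pinv m n A = (THE B. (\<forall>i j. \<not> (i < n \<and> j < m) \<longrightarrow> B i j = 0)
      \<and> meq m n (mmul m m n (mmul m n m A B) A) A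
      \<and> meq n m (mmul n n m (mmul n m n B A) B) B
      \<and> meq m m (madj m m (mmul m n m A B)) (mmul m n m A B)
      \<and> meq n n (madj n n (mmul n m n B A)) (mmul n m n B A))"

text \<open>Dictionary psi 1, ..., psi N; sample points xs 1, ..., xs N (1-based, as in the paper).
  psiX N: column j (0-based) is the vector psi(x_(j+1)); psiY likewise with y_i = T x_i.\<close>
definition psiX :: "(nat \<Rightarrow> 'a \<Rightarrow> complex) \<Rightarrow> (nat \<Rightarrow> 'a) \<Rightarrow> cmat" where
  "psiX psi xs = (\<lambda>i j. psi (Suc i) (xs (Suc j)))"

definition psiY :: "(nat \<Rightarrow> 'a \<Rightarrow> complex) \<Rightarrow> ('a \<Rightarrow> 'a) \<Rightarrow> (nat \<Rightarrow> 'a) \<Rightarrow> cmat" where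
  "psiY psi T xs = (\<lambda>i j. psi (Suc i) (T (xs (Suc j))))"

definition gram :: "(nat \<Rightarrow> 'a \<Rightarrow> complex) \<Rightarrow> (nat \<Rightarrow> 'a) \<Rightarrow> nat \<Rightarrow> cmat" where
  "gram psi xs N = (\<lambda>i j. (1 / of_nat N) *
      (\<Sum>l\<in>{1..N}. psi (Suc i) (xs l) * cnj (psi (Suc j) (xs l))))"

definition edmd_matrix :: "(nat \<Rightarrow> 'a \<Rightarrow> complex) \<Rightarrow> ('a \<Rightarrow> 'a) \<Rightarrow> (nat \<Rightarrow> 'a) \<Rightarrow> nat \<Rightarrow> cmat" where
  "edmd_matrix psi T xs N = mmul N N N (psiY psi T xs) (pinv N N (psiX psi xs))"

definition fspan :: "(nat \<Rightarrow> 'a \<Rightarrow> complex) \<Rightarrow> nat \<Rightarrow> (nat \<Rightarrow> complex) \<Rightarrow> 'a \<Rightarrow> complex" where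
  "fspan psi N c = (\<lambda>y. \<Sum>i<N. cnj (c i) * psi (Suc i) y)"

text \<open>EDMD operator: K_{N,N}(c^H psi) = c^H A psi.\<close>
definition edmd_op :: "(nat \<Rightarrow> 'a \<Rightarrow> complex) \<Rightarrow> ('a \<Rightarrow> 'a) \<Rightarrow> (nat \<Rightarrow> 'a) \<Rightarrow> nat
    \<Rightarrow> (nat \<Rightarrow> complex) \<Rightarrow> 'a \<Rightarrow> complex" where
  "edmd_op psi T xs N c = (\<lambda>y. \<Sum>i<N. \<Sum>j<N.
      cnj (c i) * edmd_matrix psi T xs N i j * psi (Suc j) y)"

text \<open>Integral of f against mu_hat_N = (1/N) sum_i delta_(x_i).\<close>
definition emp_mu :: "(nat \<Rightarrow> 'a) \<Rightarrow> nat \<Rightarrow> ('a \<Rightarrow> complex) \<Rightarrow> complex" where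
  "emp_mu xs N f = (1 / of_nat N) * (\<Sum>i\<in>{1..N}. f (xs i))"

text \<open>Integral of f against nu_N = phi_N d mu_hat_N.\<close>
definition emp_nu :: "(nat \<Rightarrow> 'a) \<Rightarrow> nat \<Rightarrow> ('a \<Rightarrow> complex) \<Rightarrow> ('a \<Rightarrow> complex) \<Rightarrow> complex" where
  "emp_nu xs N phi f = (1 / of_nat N) * (\<Sum>i\<in>{1..N}. f (xs i) * phi (xs i))"

text \<open>A complex Borel measure is represented as g d rho, with rho a finite (positive) Borel
  measure and g a rho-integrable complex density (every complex measure has this form,
  e.g. rho = |nu| and g = d nu / d |nu|).\<close>
definition complex_borel_measure :: "'a::topological_space measure \<Rightarrow> ('a \<Rightarrow> complex) \<Rightarrow> bool" where
  "complex_borel_measure rho g \<longleftrightarrow> sets rho = sets borel \<and> finite_measure rho \<and> integrable rho g"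

definition cbm_int :: "'a measure \<Rightarrow> ('a \<Rightarrow> complex) \<Rightarrow> ('a \<Rightarrow> complex) \<Rightarrow> complex" where
  "cbm_int rho g h = (LINT y|rho. h y * g y)"

definition L2 :: "'a measure \<Rightarrow> ('a \<Rightarrow> complex) \<Rightarrow> bool" where
  "L2 mu f \<longleftrightarrow> f \<in> borel_measurable mu \<and> integrable mu (\<lambda>y. (cmod (f y))\<^sup>2)"

definition koopman_bounded :: "'a measure \<Rightarrow> ('a \<Rightarrow> 'a) \<Rightarrow> bool" where
  "koopman_bounded mu T \<longleftrightarrow> (\<exists>C. \<forall>f. L2 mu f \<longrightarrow> L2 mu (f \<circ> T) \<and>
      (LINT y|mu. (cmod (f (T y)))\<^sup>2) \<le> C * (LINT y|mu. (cmod (f y))\<^sup>2))"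

definition koopman_adjoint :: "'a measure \<Rightarrow> ('a \<Rightarrow> 'a) \<Rightarrow> (('a \<Rightarrow> complex) \<Rightarrow> 'a \<Rightarrow> complex) \<Rightarrow> bool" where
  "koopman_adjoint mu T Ks \<longleftrightarrow> (\<forall>g. L2 mu g \<longrightarrow> L2 mu (Ks g)) \<and>
     (\<forall>f g. L2 mu f \<longrightarrow> L2 mu g \<longrightarrow>
        (LINT y|mu. f (T y) * cnj (g y)) = (LINT y|mu. f y * cnj (Ks g y)))"

end

theory Submission imports Defs "Jordan_Normal_Form.Determinant" "HOL-Library.Diagonal_Subsequence"
begin

(* Evaluated at the samples, the EDMD eigenrelation says phi_N(x_(i+1)) = lambda_N phi_N(x_i) along the
   trajectory, because the EDMD matrix maps psi(X) to psi(Y). Hence the integrals of h o T^-1 and of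
   lambda_N h against nu_N differ only by two boundary terms of size O(1/N), and likewise the
   integrals of f o T and f against mu_N; weak limits along a subsequence therefore satisfy the
   eigenrelation and the invariance exactly.

   The limits exist because sub-probability measures on a compact metric space are weakly
   sequentially compact.  This is proved directly: the masses of the cells of nested finite
   2^-k-nets converge along a diagonal subsequence, and the limit measure is the image of Lebesgue
   measure under the quantile map that sends t to the point singled out by the nested cells whose
   limit-mass intervals contain t.  Splitting the weights phi_N(x_i)/N into positive parts dominated
   by 1/N shows that the limit of nu_N has a bounded density g with respect to the limit mu of
   mu_N, which is what the statement about the L2(mu)-adjoint of the Koopman operator needs. *)

section \<open>EDMD eigenfunctions along the sampled trajectory\<close>

definition mat_of_cmat :: "nat \<Rightarrow> cmat \<Rightarrow> complex mat" where
  "mat_of_cmat n A = mat n n (\<lambda>(i, j). A i j)"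

lemma mat_of_cmat_carrier: "mat_of_cmat n A \<in> carrier_mat n n"
  by (simp add: mat_of_cmat_def)

lemma mat_of_cmat_index [simp]: "i < n \<Longrightarrow> j < n \<Longrightarrow> mat_of_cmat n A $$ (i, j) = A i j"
  by (simp add: mat_of_cmat_def)

lemma mat_of_cmat_mmul: "mat_of_cmat n (mmul n n n A B) = mat_of_cmat n A * mat_of_cmat n B"
  by (rule eq_matI) (auto simp: mat_of_cmat_def mmul_def scalar_prod_def row_def col_def
      atLeast0LessThan intro!: sum.cong)

lemma mat_of_cmat_one_mult [simp]: "1\<^sub>m n * mat_of_cmat n A = mat_of_cmat n A"
  by (rule left_mult_one_mat[OF mat_of_cmat_carrier])

lemma mat_of_cmat_mult_one [simp]: "mat_of_cmat n A * 1\<^sub>m n = mat_of_cmat n A"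
  by (rule right_mult_one_mat[OF mat_of_cmat_carrier])

lemma mat_of_cmat_midentity: "mat_of_cmat n midentity = 1\<^sub>m n"
  by (rule eq_matI) (auto simp: midentity_def mat_of_cmat_def)

lemma meq_iff_mat_of_cmat: "meq n n A B \<longleftrightarrow> mat_of_cmat n A = mat_of_cmat n B"
  unfolding meq_def mat_of_cmat_def mat_eq_iff by auto

lemma sum_atLeast1_atMost_eq_lessThan: "(\<Sum>i\<in>{1..n}. g i) = (\<Sum>i<n. g (Suc i))"
  by (rule sum.reindex_bij_witness[where i=Suc and j="\<lambda>l. l - 1"]) auto

text \<open>If the Gram matrix \<open>G = X X\<^sup>H / N\<close> has an inverse \<open>B\<close>, then \<open>X\<^sup>H B / N\<close> is a right inverse of \<open>X\<close>.\<close>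

lemma psiX_right_invertible:
  assumes "invertible_cmat N (gram psi xs N)"
  shows "\<exists>R. meq N N (mmul N N N (psiX psi xs) R) midentity"
proof -
  obtain B where B: "meq N N (mmul N N N (gram psi xs N) B) midentity"
    using assms unfolding invertible_cmat_def by blast
  define X where "X = psiX psi xs"
  define R where "R = (\<lambda>i j. (1 / of_nat N) * (\<Sum>k<N. cnj (X k i) * B k j))"
  have gram: "gram psi xs N i k = (1 / of_nat N) * (\<Sum>l<N. X i l * cnj (X k l))" for i k
    unfolding gram_def X_def psiX_def sum_atLeast1_atMost_eq_lessThan ..
  have "(\<Sum>l<N. X i l * R l j) = (\<Sum>k<N. gram psi xs N i k * B k j)" for i j
  proof -
    have "(\<Sum>l<N. X i l * R l j) = (\<Sum>l<N. \<Sum>k<N. (1 / of_nat N) * (X i l * cnj (X k l)) * B k j)"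
      unfolding R_def by (simp add: sum_distrib_left mult_ac)
    also have "\<dots> = (\<Sum>k<N. \<Sum>l<N. (1 / of_nat N) * (X i l * cnj (X k l)) * B k j)"
      by (rule sum.swap)
    also have "\<dots> = (\<Sum>k<N. gram psi xs N i k * B k j)"
      unfolding gram by (simp add: sum_distrib_left sum_distrib_right)
    finally show ?thesis .
  qed
  then have "mmul N N N X R = mmul N N N (gram psi xs N) B"
    unfolding mmul_def by (intro ext) simp
  with B have "meq N N (mmul N N N X R) midentity" by simp
  then show ?thesis unfolding X_def by blast
qed

definition is_pinv :: "nat \<Rightarrow> nat \<Rightarrow> cmat \<Rightarrow> cmat \<Rightarrow> bool" where
  "is_pinv m n A B \<longleftrightarrow> (\<forall>i j. \<not> (i < n \<and> j < m) \<longrightarrow> B i j = 0)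
      \<and> meq m n (mmul m m n (mmul m n m A B) A) A
      \<and> meq n m (mmul n n m (mmul n m n B A) B) B
      \<and> meq m m (madj m m (mmul m n m A B)) (mmul m n m A B)
      \<and> meq n n (madj n n (mmul n m n B A)) (mmul n m n B A)"

lemma pinv_eq_The_is_pinv: "pinv m n A = (THE B. is_pinv m n A B)"
  unfolding pinv_def is_pinv_def ..

definition restrict_cmat :: "nat \<Rightarrow> cmat \<Rightarrow> cmat" where
  "restrict_cmat n R = (\<lambda>i j. if i < n \<and> j < n then R i j else 0)"

lemma mat_of_cmat_restrict_cmat [simp]: "mat_of_cmat n (restrict_cmat n R) = mat_of_cmat n R"
  unfolding restrict_cmat_def mat_of_cmat_def by auto

lemma meq_madj_if_one:
  assumes "mat_of_cmat n C = 1\<^sub>m n"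
  shows "meq n n (madj n n C) C"
proof -
  have "C i j = (if i = j then 1 else 0)" if "i < n" "j < n" for i j
    using arg_cong[OF assms, of "\<lambda>M. M $$ (i, j)"] that by simp
  then show ?thesis unfolding meq_def madj_def by auto
qed

lemma is_pinv_restrict_inverse:
  assumes "mat_of_cmat n X * mat_of_cmat n R = 1\<^sub>m n" "mat_of_cmat n R * mat_of_cmat n X = 1\<^sub>m n"
  shows "is_pinv n n X (restrict_cmat n R)"
  unfolding is_pinv_def
proof (intro conjI)
  show "\<forall>i j. \<not> (i < n \<and> j < n) \<longrightarrow> restrict_cmat n R i j = 0" by (simp add: restrict_cmat_def)
  show "meq n n (madj n n (mmul n n n X (restrict_cmat n R))) (mmul n n n X (restrict_cmat n R))"
    "meq n n (madj n n (mmul n n n (restrict_cmat n R) X)) (mmul n n n (restrict_cmat n R) X)"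
    by (intro meq_madj_if_one, simp add: mat_of_cmat_mmul assms)+
qed (simp_all add: meq_iff_mat_of_cmat mat_of_cmat_mmul assms)

text \<open>For an invertible \<open>X\<close> the first Penrose condition \<open>X B X = X\<close> already forces \<open>B = X\<^sup>-\<^sup>1\<close>.\<close>

lemma is_pinv_unique_inverse:
  assumes XR: "mat_of_cmat n X * mat_of_cmat n R = 1\<^sub>m n" and RX: "mat_of_cmat n R * mat_of_cmat n X = 1\<^sub>m n"
    and B: "is_pinv n n X B"
  shows "B = restrict_cmat n R"
proof -
  let ?X = "mat_of_cmat n X" and ?R = "mat_of_cmat n R" and ?B = "mat_of_cmat n B"
  have XBX: "?X * ?B * ?X = ?X"
    using B unfolding is_pinv_def by (simp add: meq_iff_mat_of_cmat mat_of_cmat_mmul)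
  have "?B = (?R * ?X) * ?B * (?X * ?R)" by (simp add: RX XR)
  also have "\<dots> = ?R * (?X * ?B * ?X) * ?R"
    using mat_of_cmat_carrier[of n R] mat_of_cmat_carrier[of n X] mat_of_cmat_carrier[of n B]
    by (simp add: assoc_mult_mat[where n\<^sub>1=n and n\<^sub>2=n and n\<^sub>3=n and n\<^sub>4=n])
  also have "\<dots> = ?R" by (simp add: XBX RX)
  finally have "meq n n B R" by (simp add: meq_iff_mat_of_cmat)
  then have "B i j = R i j" if "i < n" "j < n" for i j
    using that by (simp add: meq_def)
  moreover have "B i j = 0" if "\<not> (i < n \<and> j < n)" for i j
    using B that unfolding is_pinv_def by blast
  ultimately show ?thesis unfolding restrict_cmat_def by (intro ext) auto
qed

lemma pinv_of_right_invertible: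
  assumes "meq n n (mmul n n n X R) midentity"
  shows "mat_of_cmat n (pinv n n X) * mat_of_cmat n X = 1\<^sub>m n"
proof -
  have XR: "mat_of_cmat n X * mat_of_cmat n R = 1\<^sub>m n"
    using assms by (simp add: meq_iff_mat_of_cmat mat_of_cmat_mmul mat_of_cmat_midentity)
  have RX: "mat_of_cmat n R * mat_of_cmat n X = 1\<^sub>m n"
    by (rule mat_mult_left_right_inverse[OF mat_of_cmat_carrier mat_of_cmat_carrier XR])
  have "pinv n n X = restrict_cmat n R"
    unfolding pinv_eq_The_is_pinv
    using is_pinv_restrict_inverse[OF XR RX] is_pinv_unique_inverse[OF XR RX] by (rule the_equality)
  then show ?thesis using RX by simp
qed

text \<open>Since \<open>A \<psi>(X) = \<psi>(Y)\<close>, the eigenrelation \<open>c\<^sup>H A \<psi> = \<lambda> c\<^sup>H \<psi>\<close> evaluated at a sample \<open>x\<^sub>l\<close>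
  becomes \<open>\<phi>(T x\<^sub>l) = \<lambda> \<phi>(x\<^sub>l)\<close>.\<close>

lemma edmd_eigenfunction_shift:
  assumes gram: "invertible_cmat N (gram psi xs N)"
    and eig: "edmd_op psi T xs N c = (\<lambda>y. lam * fspan psi N c y)"
    and l: "1 \<le> l" "l \<le> N"
  shows "fspan psi N c (T (xs l)) = lam * fspan psi N c (xs l)"
proof -
  let ?X = "mat_of_cmat N (psiX psi xs)" and ?Y = "mat_of_cmat N (psiY psi T xs)"
    and ?P = "mat_of_cmat N (pinv N N (psiX psi xs))"
  define A where "A = edmd_matrix psi T xs N"
  have "?P * ?X = 1\<^sub>m N"
    using psiX_right_invertible[OF gram] pinv_of_right_invertible by blast
  then have "?Y = ?Y * (?P * ?X)"
    by simp
  also have "\<dots> = ?Y * ?P * ?X"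
    by (rule assoc_mult_mat[symmetric, OF mat_of_cmat_carrier mat_of_cmat_carrier mat_of_cmat_carrier])
  also have "\<dots> = mat_of_cmat N A * ?X"
    by (simp add: A_def edmd_matrix_def mat_of_cmat_mmul)
  finally have YAX: "?Y = mat_of_cmat N (mmul N N N A (psiX psi xs))"
    by (simp add: mat_of_cmat_mmul)
  obtain k where k: "l = Suc k" "k < N" using l by (cases l) auto
  have Y: "psi (Suc i) (T (xs l)) = (\<Sum>j<N. A i j * psi (Suc j) (xs l))" if "i < N" for i
    using arg_cong[OF YAX, of "\<lambda>M. M $$ (i, k)"] that k
    by (simp add: mmul_def psiX_def psiY_def)
  have "fspan psi N c (T (xs l)) = (\<Sum>i<N. \<Sum>j<N. cnj (c i) * A i j * psi (Suc j) (xs l))"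
    unfolding fspan_def by (auto simp: Y sum_distrib_left mult_ac intro!: sum.cong)
  also have "\<dots> = lam * fspan psi N c (xs l)"
    using fun_cong[OF eig, of "xs l"] unfolding edmd_op_def A_def by simp
  finally show ?thesis .
qed

lemma norm_le_SUP_norm:
  assumes "compact (UNIV :: 'a::metric_space set)" "continuous_on UNIV (f :: 'a \<Rightarrow> 'b::real_normed_vector)"
  shows "norm (f y) \<le> (SUP y. norm (f y))"
proof (rule cSUP_upper[OF UNIV_I])
  have "continuous_on UNIV (\<lambda>y. norm (f y))" using assms(2) by (intro continuous_intros)
  then show "bdd_above (range (\<lambda>y. norm (f y)))"
    by (intro bounded_imp_bdd_above compact_imp_bounded compact_continuous_image assms(1))
qed

lemma edmd_eigenfunction_on_trajectory:
  fixes psi :: "nat \<Rightarrow> 'a::metric_space \<Rightarrow> complex"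
  assumes compact: "compact (UNIV :: 'a set)" and psi: "\<And>i. continuous_on UNIV (psi i)"
    and traj: "\<And>i. 1 \<le> i \<Longrightarrow> i \<le> N - 1 \<Longrightarrow> xs (Suc i) = T (xs i)"
    and gram: "invertible_cmat N (gram psi xs N)"
    and eigen: "\<exists>c. phi = fspan psi N c \<and> edmd_op psi T xs N c = (\<lambda>y. lam * phi y)"
    and normalized: "(SUP y. cmod (phi y)) = 1"
  shows "continuous_on UNIV phi" "\<And>y. norm (phi y) \<le> 1"
    "\<And>i. 1 \<le> i \<Longrightarrow> i \<le> N - 1 \<Longrightarrow> phi (xs (Suc i)) = lam * phi (xs i)"
proof -
  obtain c where c: "phi = fspan psi N c" "edmd_op psi T xs N c = (\<lambda>y. lam * phi y)"
    using eigen by blast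
  show cont: "continuous_on UNIV phi"
    unfolding c(1) fspan_def by (intro continuous_intros psi)
  show "norm (phi y) \<le> 1" for y
    using norm_le_SUP_norm[OF compact cont, of y] normalized by simp
  show "phi (xs (Suc i)) = lam * phi (xs i)" if "1 \<le> i" "i \<le> N - 1" for i
    using edmd_eigenfunction_shift[OF gram c(2)[unfolded c(1)], of i] traj[OF that] that c(1) by simp
qed

section \<open>Nested finite nets of a compact metric space\<close>

definition net_radius :: "nat \<Rightarrow> real" where
  "net_radius k = (1 / 2) ^ k"

lemma net_radius_pos: "0 < net_radius k"
  by (simp add: net_radius_def)

lemma net_radius_small: "0 < e \<Longrightarrow> \<exists>k. net_radius k < e"
  unfolding net_radius_def using real_arch_pow_inv[of e "1 / 2"] by simp

definition net :: "nat \<Rightarrow> 'a::metric_space list" where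
  "net k = (SOME xs. \<forall>y. \<exists>c\<in>set xs. dist c y < net_radius k)"

lemma compact_imp_finite_net:
  assumes "compact (UNIV :: 'a::metric_space set)" "0 < e"
  shows "\<exists>xs :: 'a list. \<forall>y. \<exists>c\<in>set xs. dist c y < e"
proof -
  have cover: "UNIV \<subseteq> (\<Union>c. ball (c :: 'a) e)" using assms(2) by auto
  obtain C where C: "C \<subseteq> UNIV" "finite C" "UNIV \<subseteq> (\<Union>c\<in>C. ball (c :: 'a) e)"
    by (rule compactE_image[OF assms(1) _ cover]) auto
  obtain xs where xs: "set xs = C" using finite_list[OF C(2)] by blast
  show ?thesis
  proof (intro exI allI)
    fix y :: 'a
    obtain c where "c \<in> C" "y \<in> ball c e" using C(3) by blast
    then show "\<exists>c\<in>set xs. dist c y < e" using xs by auto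
  qed
qed

definition net_cell :: "nat \<Rightarrow> 'a::metric_space \<Rightarrow> nat" where
  "net_cell k y = (LEAST j. j < length (net k :: 'a list) \<and> dist (net k ! j) y < net_radius k)"

lemma net_cell_spec:
  assumes "compact (UNIV :: 'a::metric_space set)"
  shows "net_cell k y < length (net k :: 'a list) \<and> dist (net k ! net_cell k y) (y :: 'a) < net_radius k"
proof -
  have "\<forall>y. \<exists>c\<in>set (net k :: 'a list). dist c y < net_radius k"
    unfolding net_def by (rule someI_ex[OF compact_imp_finite_net[OF assms net_radius_pos]])
  then obtain c where c: "c \<in> set (net k :: 'a list)" "dist c y < net_radius k" by blast
  then obtain j where "j < length (net k :: 'a list)" "net k ! j = c" by (auto simp: in_set_conv_nth)
  with c have "\<exists>j. j < length (net k :: 'a list) \<and> dist (net k ! j) y < net_radius k" by blast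
  then show ?thesis unfolding net_cell_def by (rule LeastI_ex)
qed

primrec address :: "nat \<Rightarrow> 'a::metric_space \<Rightarrow> nat list" where
  "address 0 y = []"
| "address (Suc k) y = net_cell k y # address k y"

lemma length_address [simp]: "length (address k y) = k"
  by (induction k) auto

lemma drop_address: "drop d (address (k + d) y) = address k y"
  by (induction d) (auto simp: drop_Suc)

lemma dist_lt_if_address_eq:
  assumes "compact (UNIV :: 'a::metric_space set)"
    and "address (Suc k) y = address (Suc k) (z :: 'a)"
  shows "dist y z < 2 * net_radius k"
proof -
  have "net_cell k y = net_cell k z" using assms(2) by simp
  then have "dist (net k ! net_cell k y) y < net_radius k" "dist (net k ! net_cell k y) z < net_radius k"
    using net_cell_spec[OF assms(1), of k y] net_cell_spec[OF assms(1), of k z] by simp_all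
  then show ?thesis using dist_triangle3[of y z "net k ! net_cell k y"] by simp
qed

lemma range_address_SucE:
  assumes "compact (UNIV :: 'a::metric_space set)" "l \<in> range (address (Suc k) :: 'a \<Rightarrow> nat list)"
  obtains j l' where "l = j # l'" "j < length (net k :: 'a list)" "l' \<in> range (address k :: 'a \<Rightarrow> nat list)"
proof -
  obtain y :: 'a where "l = address (Suc k) y" using assms(2) by blast
  then show ?thesis using that[of "net_cell k y" "address k y"] net_cell_spec[OF assms(1), of k y] by simp
qed

lemma finite_range_address:
  assumes "compact (UNIV :: 'a::metric_space set)"
  shows "finite (range (address k :: 'a \<Rightarrow> nat list))"
proof (induction k)
  case (Suc k)
  have "range (address (Suc k) :: 'a \<Rightarrow> nat list)
      \<subseteq> (\<lambda>(j, l). j # l) ` ({..<length (net k :: 'a list)} \<times> range (address k :: 'a \<Rightarrow> nat list))"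
  proof
    fix l assume "l \<in> range (address (Suc k) :: 'a \<Rightarrow> nat list)"
    then obtain j l' where "l = j # l'" "j < length (net k :: 'a list)" "l' \<in> range (address k :: 'a \<Rightarrow> nat list)"
      by (rule range_address_SucE[OF assms])
    then show "l \<in> (\<lambda>(j, l). j # l) ` ({..<length (net k :: 'a list)} \<times> range (address k :: 'a \<Rightarrow> nat list))"
      by (auto intro: image_eqI[of _ _ "(j, l')"])
  qed
  moreover have "finite ((\<lambda>(j, l). j # l) ` ({..<length (net k :: 'a list)} \<times> range (address k :: 'a \<Rightarrow> nat list)))"
    using Suc by simp
  ultimately show ?case by (rule finite_subset)
qed simp

section \<open>Weak sequential compactness of sub-probability point masses\<close>

locale weighted_point_sequence =
  fixes p :: "nat \<Rightarrow> nat \<Rightarrow> 'a::metric_space" and w :: "nat \<Rightarrow> nat \<Rightarrow> real" and K :: "nat \<Rightarrow> nat"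
  assumes compact_space: "compact (UNIV :: 'a set)"
    and weight_nonneg: "\<And>n i. 0 \<le> w n i"
    and weight_sum_le_1: "\<And>n. (\<Sum>i<K n. w n i) \<le> 1"
begin

definition net_size :: "nat \<Rightarrow> nat" where
  "net_size k = length (net k :: 'a list)"

definition cells :: "nat \<Rightarrow> nat list set" where
  "cells k = range (address k :: 'a \<Rightarrow> nat list)"

lemma net_cell_less_net_size: "net_cell k (y :: 'a) < net_size k"
  using net_cell_spec[OF compact_space] unfolding net_size_def by blast

lemma net_size_pos: "0 < net_size k"
  using net_cell_less_net_size[of k undefined] by simp

lemma finite_cells: "finite (cells k)"
  unfolding cells_def by (rule finite_range_address[OF compact_space])

lemma length_cells: "l \<in> cells k \<Longrightarrow> length l = k"
  by (auto simp: cells_def)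

lemma cells_Suc:
  assumes "l \<in> cells (Suc k)"
  obtains j l' where "l = j # l'" "j < net_size k" "l' \<in> cells k"
proof -
  obtain y :: 'a where "l = address (Suc k) y" using assms unfolding cells_def by blast
  then show ?thesis using that[of "net_cell k y" "address k y"] net_cell_less_net_size[of k y]
    by (simp add: cells_def)
qed

definition cell_mass :: "nat \<Rightarrow> nat list \<Rightarrow> real" where
  "cell_mass n l = (\<Sum>i<K n. if address (length l) (p n i) = l then w n i else 0)"

lemma cell_mass_nonneg: "0 \<le> cell_mass n l"
  unfolding cell_mass_def by (rule sum_nonneg) (simp add: weight_nonneg)

lemma cell_mass_le_1: "cell_mass n l \<le> 1"
proof -
  have "cell_mass n l \<le> (\<Sum>i<K n. w n i)"
    unfolding cell_mass_def by (rule sum_mono) (simp add: weight_nonneg)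
  then show ?thesis using weight_sum_le_1[of n] by simp
qed

lemma cell_mass_split: "cell_mass n l = (\<Sum>j<net_size (length l). cell_mass n (j # l))"
proof -
  have cell: "(\<Sum>j<net_size (length l). if address (Suc (length l)) y = j # l then v else 0)
      = (if address (length l) y = l then v else 0)" for y :: 'a and v
  proof -
    have "(\<Sum>j<net_size (length l). if address (Suc (length l)) y = j # l then v else 0)
        = (\<Sum>j<net_size (length l). if j = net_cell (length l) y then (if address (length l) y = l then v else 0) else 0)"
      by (rule sum.cong) auto
    then show ?thesis using net_cell_less_net_size[of "length l" y] by (simp add: sum.delta)
  qed
  have "(\<Sum>j<net_size (length l). cell_mass n (j # l))
      = (\<Sum>i<K n. \<Sum>j<net_size (length l). if address (Suc (length l)) (p n i) = j # l then w n i else 0)"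
    unfolding cell_mass_def by (simp only: length_Cons) (rule sum.swap)
  also have "\<dots> = cell_mass n l"
    unfolding cell_mass_def cell ..
  finally show ?thesis ..
qed

definition mass_converges :: "nat \<Rightarrow> (nat \<Rightarrow> nat) \<Rightarrow> bool" where
  "mass_converges j s \<longleftrightarrow> convergent (\<lambda>k. cell_mass (s k) (from_nat j))"

lemma subseqs_mass_converges: "subseqs mass_converges"
proof
  fix j and s :: "nat \<Rightarrow> nat"
  have "seq_compact {0..1::real}" by (rule compact_imp_seq_compact) simp
  moreover have "\<forall>k. cell_mass (s k) (from_nat j) \<in> {0..1}"
    using cell_mass_nonneg cell_mass_le_1 by simp
  ultimately obtain L r where "strict_mono r" "((\<lambda>k. cell_mass (s k) (from_nat j)) \<circ> r) \<longlonglongrightarrow> L"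
    by (rule seq_compactE)
  then show "\<exists>r. strict_mono r \<and> mass_converges j (s \<circ> r)"
    unfolding mass_converges_def convergent_def by (auto simp: o_def)
qed

definition diag :: "nat \<Rightarrow> nat" where
  "diag = subseqs.diagseq mass_converges"

lemma strict_mono_diag: "strict_mono diag"
  unfolding diag_def by (rule subseqs.subseq_diagseq[OF subseqs_mass_converges])

lemma convergent_cell_mass_diag: "convergent (\<lambda>i. cell_mass (diag i) l)"
proof -
  have "mass_converges (to_nat l) (diag \<circ> (+) (Suc (to_nat l)))"
    unfolding diag_def
  proof (rule subseqs.diagseq_holds[OF subseqs_mass_converges])
    fix r s n assume "strict_mono (r :: nat \<Rightarrow> nat)" "mass_converges n s"
    then obtain L where "(\<lambda>k. cell_mass (s k) (from_nat n)) \<longlonglongrightarrow> L"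
      unfolding mass_converges_def convergent_def by blast
    from LIMSEQ_subseq_LIMSEQ[OF this \<open>strict_mono r\<close>] show "mass_converges n (s \<circ> r)"
      unfolding mass_converges_def convergent_def by (auto simp: o_def)
  qed
  then obtain L where "(\<lambda>i. cell_mass (diag (i + Suc (to_nat l))) l) \<longlonglongrightarrow> L"
    unfolding mass_converges_def convergent_def by (auto simp: o_def add.commute)
  then have "(\<lambda>i. cell_mass (diag i) l) \<longlonglongrightarrow> L" by (rule LIMSEQ_offset)
  then show ?thesis unfolding convergent_def by blast
qed

definition mass :: "nat list \<Rightarrow> real" where
  "mass l = lim (\<lambda>i. cell_mass (diag i) l)"

lemma cell_mass_diag_LIMSEQ: "(\<lambda>i. cell_mass (diag i) l) \<longlonglongrightarrow> mass l"
  unfolding mass_def using convergent_cell_mass_diag by (simp add: convergent_LIMSEQ_iff)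

lemma mass_nonneg: "0 \<le> mass l"
  by (rule LIMSEQ_le_const[OF cell_mass_diag_LIMSEQ]) (simp add: cell_mass_nonneg)

lemma mass_le_1: "mass l \<le> 1"
  by (rule LIMSEQ_le_const2[OF cell_mass_diag_LIMSEQ]) (simp add: cell_mass_le_1)

lemma mass_split: "mass l = (\<Sum>j<net_size (length l). mass (j # l))"
proof -
  have "(\<lambda>i. cell_mass (diag i) l) \<longlonglongrightarrow> (\<Sum>j<net_size (length l). mass (j # l))"
    unfolding cell_mass_split[of _ l] by (intro tendsto_sum cell_mass_diag_LIMSEQ)
  then show ?thesis using cell_mass_diag_LIMSEQ LIMSEQ_unique by blast
qed

lemma mass_pos_imp_cell:
  assumes "0 < mass l"
  shows "l \<in> cells (length l)"
proof (rule ccontr)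
  assume "l \<notin> cells (length l)"
  then have "address (length l) (p n i) \<noteq> l" for n i
    unfolding cells_def using rangeI[of "address (length l)" "p n i"] by metis
  then have "cell_mass n l = 0" for n
    unfolding cell_mass_def by simp
  then have "mass l = 0"
    using cell_mass_diag_LIMSEQ[of l] by (simp add: LIMSEQ_const_iff)
  then show False using assms by simp
qed

text \<open>The limit masses of the children of a cell \<open>l\<close> are laid out as consecutive subintervals of the
  interval \<open>[cell_start l, cell_start l + mass l)\<close> of \<open>l\<close>; \<open>quantile_address k t\<close> is the depth-\<open>k\<close>
  cell whose interval contains \<open>t\<close>.\<close>

primrec cell_start :: "nat list \<Rightarrow> real" where
  "cell_start [] = 0"
| "cell_start (j # l) = cell_start l + (\<Sum>i<j. mass (i # l))"

definition total_mass :: real where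
  "total_mass = mass []"

primrec quantile_address :: "nat \<Rightarrow> real \<Rightarrow> nat list" where
  "quantile_address 0 t = []"
| "quantile_address (Suc k) t =
    (LEAST j. t < cell_start (j # quantile_address k t) + mass (j # quantile_address k t))
      # quantile_address k t"

lemma length_quantile_address [simp]: "length (quantile_address k t) = k"
  by (induction k) auto

lemma drop_quantile_address: "drop d (quantile_address (k + d) t) = quantile_address k t"
  by (induction d) (auto simp: drop_Suc)

lemma cell_end_Cons: "cell_start (j # l) + mass (j # l) = cell_start l + (\<Sum>i<Suc j. mass (i # l))"
  by simp

lemma child_interval_subset:
  assumes "j < net_size (length l)"
  shows "cell_start l \<le> cell_start (j # l)"
    and "cell_start (j # l) + mass (j # l) \<le> cell_start l + mass l"
proof -
  show "cell_start l \<le> cell_start (j # l)" by (simp add: sum_nonneg mass_nonneg)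
  have "(\<Sum>i<Suc j. mass (i # l)) \<le> (\<Sum>i<net_size (length l). mass (i # l))"
    by (rule sum_mono2) (use assms in \<open>auto simp: mass_nonneg\<close>)
  then show "cell_start (j # l) + mass (j # l) \<le> cell_start l + mass l"
    using mass_split[of l] by simp
qed

lemma last_child_end: "cell_start ((net_size (length l) - 1) # l) + mass ((net_size (length l) - 1) # l)
    = cell_start l + mass l"
proof -
  have "Suc (net_size (length l) - 1) = net_size (length l)" using net_size_pos by simp
  then show ?thesis using mass_split[of l] by (simp only: cell_end_Cons)
qed

lemma quantile_address_in_interval:
  assumes "0 \<le> t" "t < total_mass"
  shows "cell_start (quantile_address k t) \<le> t \<and> t < cell_start (quantile_address k t) + mass (quantile_address k t)"
proof (induction k)
  case 0 then show ?case using assms by (simp add: total_mass_def)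
next
  case (Suc k)
  define l where "l = quantile_address k t"
  define P where "P = (\<lambda>j. t < cell_start (j # l) + mass (j # l))"
  have "P (net_size k - 1)"
    using Suc last_child_end[of l] unfolding P_def l_def by simp
  then have j0: "P (LEAST j. P j)" by (rule LeastI)
  have "cell_start ((LEAST j. P j) # l) \<le> t"
  proof (cases "LEAST j. P j")
    case 0 then show ?thesis using Suc unfolding l_def by simp
  next
    case (Suc j)
    then have "\<not> P j" using not_less_Least[of j P] by simp
    then have "cell_start (j # l) + mass (j # l) \<le> t" unfolding P_def by simp
    then show ?thesis using Suc by simp
  qed
  moreover have "quantile_address (Suc k) t = (LEAST j. P j) # l"
    unfolding P_def l_def by simp
  ultimately show ?case using j0 unfolding P_def by simp
qed

lemma quantile_address_unique:
  assumes "l \<in> cells k" "cell_start l \<le> t" "t < cell_start l + mass l"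
  shows "quantile_address k t = l"
  using assms
proof (induction k arbitrary: l)
  case 0 then show ?case using length_cells by auto
next
  case (Suc k)
  obtain j l' where l: "l = j # l'" "j < net_size k" "l' \<in> cells k"
    using cells_Suc[OF Suc.prems(1)] by blast
  have "length l' = k" using l(3) length_cells by blast
  then have "quantile_address k t = l'"
    using Suc.IH[OF l(3)] Suc.prems(2,3) child_interval_subset[of j l'] l by fastforce
  moreover have "(LEAST i. t < cell_start (i # l') + mass (i # l')) = j"
  proof (rule Least_equality)
    show "t < cell_start (j # l') + mass (j # l')" using Suc.prems(3) l(1) by simp
  next
    fix i assume i: "t < cell_start (i # l') + mass (i # l')"
    show "j \<le> i"
    proof (rule ccontr)
      assume "\<not> j \<le> i"
      then have "(\<Sum>x<Suc i. mass (x # l')) \<le> (\<Sum>x<j. mass (x # l'))"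
        by (intro sum_mono2) (auto simp: mass_nonneg)
      then have "cell_start (i # l') + mass (i # l') \<le> cell_start (j # l')"
        by (simp only: cell_end_Cons) simp
      then show False using i Suc.prems(2) l(1) by simp
    qed
  qed
  ultimately show ?case using l(1) by simp
qed

lemma cell_interval_subset_total:
  assumes "l \<in> cells k"
  shows "0 \<le> cell_start l \<and> cell_start l + mass l \<le> total_mass"
  using assms
proof (induction k arbitrary: l)
  case 0
  then have "l = []" using length_cells by blast
  then show ?case by (simp add: total_mass_def)
next
  case (Suc k)
  obtain j l' where l: "l = j # l'" "j < net_size k" "l' \<in> cells k"
    using cells_Suc[OF Suc.prems] by blast
  have "length l' = k" using l(3) length_cells by blast
  then show ?case using Suc.IH[OF l(3)] child_interval_subset[of j l'] l by fastforce
qed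

lemma quantile_address_in_cells:
  assumes "0 \<le> t" "t < total_mass"
  shows "quantile_address k t \<in> cells k"
proof -
  have "0 < mass (quantile_address k t)" using quantile_address_in_interval[OF assms, of k] by linarith
  then show ?thesis using mass_pos_imp_cell by fastforce
qed

lemma quantile_address_eq_iff:
  assumes "0 \<le> t" "t < total_mass" "l \<in> cells k"
  shows "quantile_address k t = l \<longleftrightarrow> cell_start l \<le> t \<and> t < cell_start l + mass l"
  using quantile_address_in_interval[OF assms(1,2)] quantile_address_unique[OF assms(3)] by blast

lemma measurable_quantile_address: "quantile_address k \<in> borel \<rightarrow>\<^sub>M count_space UNIV"
proof (induction k)
  case (Suc k)
  have "(\<lambda>t. (LEAST j. t < cell_start (j # l) + mass (j # l)) # l) \<in> borel \<rightarrow>\<^sub>M count_space UNIV" for l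
    by (rule measurable_compose[OF measurable_Least measurable_count_space]) measurable
  then show ?case unfolding quantile_address.simps by (rule measurable_compose_countable[OF _ Suc])
qed simp

definition representative :: "nat list \<Rightarrow> 'a" where
  "representative l = (SOME y. address (length l) y = l)"

lemma address_representative: "l \<in> cells k \<Longrightarrow> address k (representative l) = l"
  unfolding cells_def representative_def by (auto intro: someI)

definition quantile_approx :: "nat \<Rightarrow> real \<Rightarrow> 'a" where
  "quantile_approx k t = representative (quantile_address k t)"

lemma measurable_quantile_approx: "quantile_approx k \<in> borel_measurable borel"
  unfolding quantile_approx_def
  by (rule measurable_compose_countable[OF _ measurable_quantile_address]) simp

lemma address_quantile_approx:
  assumes "0 \<le> t" "t < total_mass" "k \<le> j"
  shows "address k (quantile_approx j t) = quantile_address k t"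
proof -
  have j: "j = k + (j - k)" using assms(3) by simp
  have "address j (quantile_approx j t) = quantile_address j t"
    unfolding quantile_approx_def
    by (rule address_representative[OF quantile_address_in_cells[OF assms(1,2)]])
  then show ?thesis
    using drop_address[of "j - k" k] drop_quantile_address[of "j - k" k] j by metis
qed

lemma dist_quantile_approx:
  assumes "0 \<le> t" "t < total_mass" "Suc k \<le> j"
  shows "dist (quantile_approx j t) (quantile_approx (Suc k) t) < 2 * net_radius k"
  using address_quantile_approx[OF assms] address_quantile_approx[OF assms(1,2) order_refl]
  by (intro dist_lt_if_address_eq[OF compact_space]) simp

lemma Cauchy_quantile_approx:
  assumes "0 \<le> t" "t < total_mass"
  shows "Cauchy (\<lambda>j. quantile_approx j t)"
proof (rule metric_CauchyI)
  fix e :: real assume "0 < e"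
  then obtain k where k: "net_radius k < e / 4" using net_radius_small[of "e / 4"] by auto
  have "dist (quantile_approx i t) (quantile_approx j t) < e" if "Suc k \<le> i" "Suc k \<le> j" for i j
    using dist_quantile_approx[OF assms that(1)] dist_quantile_approx[OF assms that(2)] k
      dist_triangle2[of "quantile_approx i t" "quantile_approx j t" "quantile_approx (Suc k) t"]
    by simp
  then show "\<exists>M. \<forall>i\<ge>M. \<forall>j\<ge>M. dist (quantile_approx i t) (quantile_approx j t) < e" by blast
qed

definition quantile_point :: "real \<Rightarrow> 'a" where
  "quantile_point t = lim (\<lambda>j. quantile_approx j t)"

lemma quantile_approx_LIMSEQ:
  assumes "0 \<le> t" "t < total_mass"
  shows "(\<lambda>j. quantile_approx j t) \<longlonglongrightarrow> quantile_point t"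
proof -
  obtain L where "(\<lambda>j. quantile_approx j t) \<longlonglongrightarrow> L"
    using Cauchy_quantile_approx[OF assms] compact_imp_complete[OF compact_space]
    unfolding complete_def by blast
  then show ?thesis unfolding quantile_point_def by (simp add: limI)
qed

lemma dist_quantile_point_approx:
  assumes "0 \<le> t" "t < total_mass"
  shows "dist (quantile_point t) (quantile_approx (Suc k) t) \<le> 2 * net_radius k"
proof (rule LIMSEQ_le_const2)
  show "(\<lambda>j. dist (quantile_approx j t) (quantile_approx (Suc k) t))
      \<longlonglongrightarrow> dist (quantile_point t) (quantile_approx (Suc k) t)"
    by (intro tendsto_intros quantile_approx_LIMSEQ[OF assms])
  show "\<exists>N. \<forall>j\<ge>N. dist (quantile_approx j t) (quantile_approx (Suc k) t) \<le> 2 * net_radius k"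
    using dist_quantile_approx[OF assms] less_imp_le by blast
qed

definition param_measure :: "real measure" where
  "param_measure = restrict_space lborel {0..<total_mass}"

lemma space_param_measure [simp]: "space param_measure = {0..<total_mass}"
  by (simp add: param_measure_def)

lemma measure_param_measure:
  "A \<subseteq> {0..<total_mass} \<Longrightarrow> measure param_measure A = measure lborel A"
  unfolding param_measure_def by (rule measure_restrict_space) simp

lemma finite_measure_param_measure: "finite_measure param_measure"
  using mass_nonneg[of "[]"]
  by (intro finite_measureI) (simp add: param_measure_def emeasure_restrict_space total_mass_def)

lemma measurable_quantile_point: "quantile_point \<in> borel_measurable param_measure"
proof (rule borel_measurable_LIMSEQ_metric)
  show "quantile_approx j \<in> borel_measurable param_measure" for j
    unfolding param_measure_def using measurable_quantile_approx[of j]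
    by (intro measurable_restrict_space1) simp
  show "(\<lambda>j. quantile_approx j t) \<longlonglongrightarrow> quantile_point t" if "t \<in> space param_measure" for t
    using quantile_approx_LIMSEQ that by simp
qed

definition limit_measure :: "'a measure" where
  "limit_measure = distr param_measure borel quantile_point"

lemma sets_limit_measure: "sets limit_measure = sets borel"
  by (simp add: limit_measure_def)

lemma finite_measure_limit_measure: "finite_measure limit_measure"
  unfolding limit_measure_def
  by (rule finite_measure.finite_measure_distr[OF finite_measure_param_measure measurable_quantile_point])

lemma integral_quantile_address:
  fixes F :: "nat list \<Rightarrow> real"
  shows "(LINT t|param_measure. F (quantile_address k t)) = (\<Sum>l\<in>cells k. mass l * F l)"
proof -
  define I where "I l = {cell_start l..<cell_start l + mass l}" for l
  have I: "I l \<subseteq> {0..<total_mass}" "I l \<in> sets param_measure" if "l \<in> cells k" for l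
    using cell_interval_subset_total[OF that]
    by (auto simp: I_def param_measure_def sets_restrict_space_iff)
  have integrable: "integrable param_measure (indicat_real (I l))" if "l \<in> cells k" for l
    using I[OF that] finite_measure.emeasure_finite[OF finite_measure_param_measure]
    by (simp add: less_top[symmetric])
  have integral_I: "(LINT t|param_measure. indicat_real (I l) t) = mass l" if "l \<in> cells k" for l
  proof -
    have "(LINT t|param_measure. indicat_real (I l) t) = measure param_measure (I l)"
      using I[OF that] finite_measure.emeasure_finite[OF finite_measure_param_measure]
      by (simp add: Int_absorb2)
    also have "\<dots> = measure lborel (I l)" by (rule measure_param_measure[OF I(1)[OF that]])
    also have "\<dots> = mass l" using mass_nonneg[of l] by (simp add: I_def)
    finally show ?thesis .
  qed
  have "F (quantile_address k t) = (\<Sum>l\<in>cells k. indicat_real (I l) t * F l)"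
    if "t \<in> space param_measure" for t
  proof -
    have t: "0 \<le> t" "t < total_mass" using that by auto
    have "(\<Sum>l\<in>cells k. indicat_real (I l) t * F l) = (\<Sum>l\<in>cells k. if quantile_address k t = l then F l else 0)"
      using quantile_address_eq_iff[OF t] by (intro sum.cong) (auto simp: I_def indicator_def)
    then show ?thesis using finite_cells quantile_address_in_cells[OF t] by (simp add: sum.delta)
  qed
  then have "(LINT t|param_measure. F (quantile_address k t))
      = (LINT t|param_measure. (\<Sum>l\<in>cells k. indicat_real (I l) t * F l))"
    by (intro Bochner_Integration.integral_cong) simp_all
  also have "\<dots> = (\<Sum>l\<in>cells k. (LINT t|param_measure. indicat_real (I l) t) * F l)"
    using integrable by simp
  also have "\<dots> = (\<Sum>l\<in>cells k. mass l * F l)"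
    using integral_I by simp
  finally show ?thesis .
qed

lemma integral_limit_measure_approx:
  assumes f: "continuous_on UNIV f" and e: "0 \<le> e"
    and modulus: "\<And>y z. dist y z \<le> 2 * net_radius k \<Longrightarrow> \<bar>f y - f z\<bar> \<le> e"
  shows "\<bar>integral\<^sup>L limit_measure f - (\<Sum>l\<in>cells (Suc k). mass l * f (representative l))\<bar> \<le> e"
proof -
  have fm: "f \<in> borel_measurable borel" by (rule borel_measurable_continuous_onI[OF f])
  obtain B where B: "\<And>y. \<bar>f y\<bar> \<le> B"
    using compact_imp_bounded[OF compact_continuous_image[OF f compact_space]]
    unfolding bounded_iff by auto
  have int_point: "integrable param_measure (\<lambda>t. f (quantile_point t))"
    using measurable_compose[OF measurable_quantile_point fm] B
    by (intro finite_measure.integrable_const_bound[OF finite_measure_param_measure]) auto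
  have approx_meas: "quantile_approx (Suc k) \<in> borel_measurable param_measure"
    unfolding param_measure_def using measurable_quantile_approx
    by (intro measurable_restrict_space1) simp
  have int_approx: "integrable param_measure (\<lambda>t. f (quantile_approx (Suc k) t))"
    using measurable_compose[OF approx_meas fm] B
    by (intro finite_measure.integrable_const_bound[OF finite_measure_param_measure]) auto
  have "integral\<^sup>L limit_measure f = (LINT t|param_measure. f (quantile_point t))"
    unfolding limit_measure_def by (rule integral_distr[OF measurable_quantile_point fm])
  moreover have "(\<Sum>l\<in>cells (Suc k). mass l * f (representative l))
      = (LINT t|param_measure. f (quantile_approx (Suc k) t))"
    unfolding quantile_approx_def by (rule integral_quantile_address[symmetric])
  ultimately have eq: "integral\<^sup>L limit_measure f - (\<Sum>l\<in>cells (Suc k). mass l * f (representative l))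
      = (LINT t|param_measure. f (quantile_point t) - f (quantile_approx (Suc k) t))"
    using int_point int_approx by simp
  have "\<bar>f (quantile_point t) - f (quantile_approx (Suc k) t)\<bar> \<le> e" if "t \<in> space param_measure" for t
    using that by (intro modulus dist_quantile_point_approx) auto
  then have "(LINT t|param_measure. \<bar>f (quantile_point t) - f (quantile_approx (Suc k) t)\<bar>)
      \<le> (LINT t|param_measure. e)"
    using int_point int_approx finite_measure.integrable_const[OF finite_measure_param_measure]
    by (intro integral_mono) auto
  then have "\<bar>integral\<^sup>L limit_measure f - (\<Sum>l\<in>cells (Suc k). mass l * f (representative l))\<bar>
      \<le> (LINT t|param_measure. e)"
    unfolding eq by (rule order_trans[OF integral_abs_bound])
  also have "\<dots> = total_mass * e"
    using measure_param_measure[of "{0..<total_mass}"] mass_nonneg[of "[]"] by (simp add: total_mass_def)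
  also have "\<dots> \<le> e"
    unfolding total_mass_def by (rule mult_left_le_one_le[OF e mass_nonneg mass_le_1])
  finally show ?thesis .
qed

lemma weighted_sum_cell_approx:
  assumes e: "0 \<le> e"
    and modulus: "\<And>y z. dist y z \<le> 2 * net_radius k \<Longrightarrow> \<bar>f y - f z\<bar> \<le> e"
  shows "\<bar>(\<Sum>i<K n. w n i * f (p n i)) - (\<Sum>l\<in>cells (Suc k). cell_mass n l * f (representative l))\<bar> \<le> e"
proof -
  let ?q = "\<lambda>i. representative (address (Suc k) (p n i))"
  have "(\<Sum>l\<in>cells (Suc k). cell_mass n l * f (representative l))
      = (\<Sum>l\<in>cells (Suc k). \<Sum>i<K n. if address (Suc k) (p n i) = l then w n i * f (representative l) else 0)"
    unfolding cell_mass_def sum_distrib_right using length_cells by (intro sum.cong) auto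
  also have "\<dots> = (\<Sum>i<K n. \<Sum>l\<in>cells (Suc k). if address (Suc k) (p n i) = l then w n i * f (representative l) else 0)"
    by (rule sum.swap)
  also have "\<dots> = (\<Sum>i<K n. w n i * f (?q i))"
  proof (rule sum.cong[OF refl])
    fix i
    have "address (Suc k) (p n i) \<in> cells (Suc k)" unfolding cells_def by (rule rangeI)
    then show "(\<Sum>l\<in>cells (Suc k). if address (Suc k) (p n i) = l then w n i * f (representative l) else 0)
        = w n i * f (?q i)"
      using finite_cells by (simp add: sum.delta')
  qed
  finally have "(\<Sum>i<K n. w n i * f (p n i)) - (\<Sum>l\<in>cells (Suc k). cell_mass n l * f (representative l))
      = (\<Sum>i<K n. w n i * (f (p n i) - f (?q i)))"
    by (simp add: sum_subtractf right_diff_distrib)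
  also have "\<bar>\<dots>\<bar> \<le> (\<Sum>i<K n. w n i * e)"
  proof (rule order_trans[OF sum_abs sum_mono])
    fix i
    have "address (Suc k) (p n i) \<in> cells (Suc k)" by (simp add: cells_def)
    then have "address (Suc k) (?q i) = address (Suc k) (p n i)" by (rule address_representative)
    then have "dist (p n i) (?q i) < 2 * net_radius k"
      by (intro dist_lt_if_address_eq[OF compact_space]) (rule sym)
    then show "\<bar>w n i * (f (p n i) - f (?q i))\<bar> \<le> w n i * e"
      using modulus weight_nonneg[of n i] by (simp add: abs_mult mult_left_mono)
  qed
  also have "\<dots> \<le> e"
    unfolding sum_distrib_right[symmetric]
    by (rule mult_left_le_one_le[OF e sum_nonneg[OF weight_nonneg] weight_sum_le_1])
  finally show ?thesis .
qed

lemma weighted_sum_LIMSEQ: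
  assumes f: "continuous_on UNIV f"
  shows "(\<lambda>n. \<Sum>i<K (diag n). w (diag n) i * f (p (diag n) i)) \<longlonglongrightarrow> integral\<^sup>L limit_measure f"
proof (rule LIMSEQ_I)
  fix r :: real assume "0 < r"
  define e where "e = r / 4"
  have e: "0 < e" using \<open>0 < r\<close> by (simp add: e_def)
  obtain d where "0 < d" "\<forall>z\<in>UNIV. \<forall>y\<in>UNIV. dist y z < d \<longrightarrow> dist (f y) (f z) < e"
    using compact_uniformly_continuous[OF f compact_space] e
    unfolding uniformly_continuous_on_def by blast
  then have d: "0 < d" "\<And>y z. dist y z < d \<Longrightarrow> dist (f y) (f z) < e" by auto
  obtain k where k: "net_radius k < d / 2" using net_radius_small[of "d / 2"] d(1) by auto
  have modulus: "\<bar>f y - f z\<bar> \<le> e" if "dist y z \<le> 2 * net_radius k" for y z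
    using d(2)[of y z] that k by (simp add: dist_real_def)
  define S where "S n = (\<Sum>l\<in>cells (Suc k). cell_mass n l * f (representative l))" for n
  have "(\<lambda>n. S (diag n)) \<longlonglongrightarrow> (\<Sum>l\<in>cells (Suc k). mass l * f (representative l))"
    unfolding S_def by (intro tendsto_sum tendsto_mult_right cell_mass_diag_LIMSEQ)
  from LIMSEQ_D[OF this e] obtain N where N: "\<And>n. n \<ge> N \<Longrightarrow>
      \<bar>S (diag n) - (\<Sum>l\<in>cells (Suc k). mass l * f (representative l))\<bar> < e"
    by auto
  have "\<bar>(\<Sum>i<K (diag n). w (diag n) i * f (p (diag n) i)) - integral\<^sup>L limit_measure f\<bar> < r"
    if "n \<ge> N" for n
    using N[OF that] weighted_sum_cell_approx[where k=k and f=f and n="diag n", OF less_imp_le[OF e] modulus]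
      integral_limit_measure_approx[where k=k, OF f less_imp_le[OF e] modulus]
    unfolding S_def e_def by linarith
  then show "\<exists>N. \<forall>n\<ge>N. norm ((\<Sum>i<K (diag n). w (diag n) i * f (p (diag n) i)) - integral\<^sup>L limit_measure f) < r"
    unfolding real_norm_def by blast
qed

end

lemma integrable_bounded_measurable:
  fixes f :: "'a \<Rightarrow> 'b::{banach, second_countable_topology}"
  assumes "finite_measure M" "f \<in> borel_measurable M" "\<And>y. norm (f y) \<le> B"
  shows "integrable M f"
proof (rule finite_measure.integrable_const_bound[OF assms(1) _ assms(2)])
  show "AE y in M. norm (f y) \<le> B" using assms(3) by simp
qed

lemma continuous_on_compact_UNIV_bound:
  assumes "compact (UNIV :: 'a::metric_space set)" "continuous_on UNIV (f :: 'a \<Rightarrow> 'b::real_normed_vector)"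
  shows "\<exists>B. \<forall>y. norm (f y) \<le> B"
  using compact_imp_bounded[OF compact_continuous_image[OF assms(2,1)]] unfolding bounded_iff by auto

lemma borel_measurable_continuous_on_UNIV:
  assumes "sets M = sets borel" "continuous_on UNIV f"
  shows "f \<in> borel_measurable M"
  unfolding measurable_cong_sets[OF assms(1) refl] by (rule borel_measurable_continuous_onI[OF assms(2)])

lemma integrable_continuous_compact_UNIV:
  fixes f :: "'a::metric_space \<Rightarrow> 'b::{banach, second_countable_topology}"
  assumes "compact (UNIV :: 'a set)" "sets M = sets borel" "finite_measure M" "continuous_on UNIV f"
  shows "integrable M f"
proof -
  obtain B where "\<And>y. norm (f y) \<le> B" using continuous_on_compact_UNIV_bound[OF assms(1,4)] by blast
  then show ?thesis
    using borel_measurable_continuous_on_UNIV[OF assms(2,4)] assms(3) by (intro integrable_bounded_measurable)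
qed

lemma integral_closed_cutoff_LIMSEQ:
  fixes M :: "'a::metric_space measure"
  assumes M: "sets M = sets borel" "finite_measure M" and F: "closed F" "F \<noteq> {}"
  shows "(\<lambda>k. \<integral>x. max 0 (1 - real k * infdist x F) \<partial>M) \<longlonglongrightarrow> measure M F"
proof -
  have "(\<lambda>k. max 0 (1 - real k * infdist x F)) \<longlonglongrightarrow> indicator F x" for x
  proof (cases "x \<in> F")
    case True
    then show ?thesis using in_closed_iff_infdist_zero[OF F] by simp
  next
    case False
    then have pos: "0 < infdist x F"
      using in_closed_iff_infdist_zero[OF F] infdist_nonneg[of x F] by (simp add: order_le_less)
    obtain N :: nat where N: "1 / infdist x F < real N" using reals_Archimedean2 by blast
    have "max 0 (1 - real k * infdist x F) = 0" if "N \<le> k" for k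
    proof -
      have "1 / infdist x F < real k" using N that by (meson less_le_trans of_nat_le_iff)
      then show ?thesis using pos by (simp add: field_simps)
    qed
    then have "\<forall>\<^sub>F k in sequentially. max 0 (1 - real k * infdist x F) = 0"
      unfolding eventually_sequentially by blast
    then show ?thesis using False by (simp add: tendsto_eventually)
  qed
  moreover have "(\<lambda>x. max 0 (1 - real k * infdist x F)) \<in> borel_measurable M" for k
    by (intro borel_measurable_continuous_on_UNIV[OF M(1)] continuous_intros)
  ultimately have "(\<lambda>k. \<integral>x. max 0 (1 - real k * infdist x F) \<partial>M) \<longlonglongrightarrow> integral\<^sup>L M (indicator F)"
    using M borel_closed[OF F(1)] by (intro integral_dominated_convergence[where w="\<lambda>x. 1"])
      (auto simp: finite_measure.integrable_const infdist_nonneg borel_measurable_indicator_iff)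
  then show ?thesis
    using M finite_measure.emeasure_finite[OF M(2)] sets_eq_imp_space_eq[OF M(1)] by simp
qed

text \<open>The two sides agree on closed sets by approximating indicators with continuous cut-offs, and
  closed sets generate the Borel sets as an intersection-stable family.\<close>

lemma measure_add_eq_of_integral_add_eq:
  fixes M1 M2 M3 :: "'a::metric_space measure"
  assumes sets: "sets M1 = sets borel" "sets M2 = sets borel" "sets M3 = sets borel"
    and fin: "finite_measure M1" "finite_measure M2" "finite_measure M3"
    and add: "\<And>f :: 'a \<Rightarrow> real. continuous_on UNIV f \<Longrightarrow> integral\<^sup>L M1 f + integral\<^sup>L M2 f = integral\<^sup>L M3 f"
    and A: "A \<in> sets borel"
  shows "measure M1 A + measure M2 A = measure M3 A"
proof -
  have M: "sets N = sigma_sets UNIV (Collect closed)" "finite_measure N" "space N = UNIV"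
    if "N \<in> {M1, M2, M3}" for N
  proof -
    show "sets N = sigma_sets UNIV (Collect closed)" "finite_measure N"
      using that sets fin by (auto simp: borel_eq_closed)
    show "space N = UNIV" using that sets_eq_imp_space_eq[of _ borel] sets by auto
  qed
  have closed: "measure M1 F + measure M2 F = measure M3 F" if "closed F" for F
  proof (cases "F = {}")
    case False
    let ?f = "\<lambda>k x. max 0 (1 - real k * infdist x F)"
    note cutoff = integral_closed_cutoff_LIMSEQ[OF _ _ that False]
    have "(\<lambda>k. integral\<^sup>L M3 (?f k)) \<longlonglongrightarrow> measure M1 F + measure M2 F"
      using tendsto_add[OF cutoff[OF sets(1) fin(1)] cutoff[OF sets(2) fin(2)]]
      by (simp add: add continuous_intros)
    then show ?thesis using LIMSEQ_unique cutoff[OF sets(3) fin(3)] by blast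
  qed simp
  have "Int_stable (Collect closed)" by (auto simp: Int_stable_def)
  moreover have "Collect closed \<subseteq> Pow UNIV" by simp
  moreover have "A \<in> sigma_sets UNIV (Collect closed)" using A by (simp add: borel_eq_closed)
  ultimately show ?thesis
  proof (induction rule: sigma_sets_induct_disjoint)
    case (compl A)
    have "measure N (UNIV - A) = measure N UNIV - measure N A" if "N \<in> {M1, M2, M3}" for N
      using finite_measure.finite_measure_compl[OF M(2)[OF that], of A] M(1,3)[OF that] compl(1) by simp
    then show ?case using compl(2) closed[OF closed_UNIV] by simp
  next
    case (union A)
    have sums: "(\<lambda>i. measure N (A i)) sums measure N (\<Union>i. A i)" if "N \<in> {M1, M2, M3}" for N
      using finite_measure.finite_measure_UNION[OF M(2)[OF that] _ union(1)] M(1)[OF that] union(2) by simp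
    have "(\<lambda>i. measure M1 (A i) + measure M2 (A i)) sums (measure M1 (\<Union>i. A i) + measure M2 (\<Union>i. A i))"
      by (intro sums_add sums) simp_all
    then have "(\<lambda>i. measure M3 (A i)) sums (measure M1 (\<Union>i. A i) + measure M2 (\<Union>i. A i))"
      using union(3) by simp
    then show ?case using sums_unique2[OF sums[of M3]] by simp
  qed (use closed in simp_all)
qed

lemma finite_measure_eqI_integral_continuous:
  fixes M N :: "'a::metric_space measure"
  assumes sets: "sets M = sets borel" "sets N = sets borel" and fin: "finite_measure M" "finite_measure N"
    and eq: "\<And>f :: 'a \<Rightarrow> real. continuous_on UNIV f \<Longrightarrow> integral\<^sup>L M f = integral\<^sup>L N f"
  shows "M = N"
proof (rule measure_eqI)
  show "sets M = sets N" using sets by simp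
  fix A assume "A \<in> sets M"
  then have "measure M A + measure (null_measure borel) A = measure N A"
    using sets fin eq
    by (intro measure_add_eq_of_integral_add_eq[of M "null_measure borel" N]) (auto intro: finite_measureI)
  then show "emeasure M A = emeasure N A"
    using finite_measure.emeasure_eq_measure[OF fin(1)] finite_measure.emeasure_eq_measure[OF fin(2)] by simp
qed

lemma AE_le_1_of_integral_indicator_le:
  fixes D :: "'a \<Rightarrow> real"
  assumes fin: "finite_measure M" and D: "D \<in> borel_measurable M" "integrable M D"
    and le: "\<And>X. X \<in> sets M \<Longrightarrow> (\<integral>x. D x * indicator X x \<partial>M) \<le> measure M X"
  shows "AE x in M. D x \<le> 1"
proof -
  define X where "X = {x \<in> space M. 1 < D x}"
  have X: "X \<in> sets M" unfolding X_def using D(1) by measurable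
  have int_X: "integrable M (indicat_real X)"
    using X finite_measure.emeasure_finite[OF fin] by (simp add: less_top[symmetric])
  have int_DX: "integrable M (\<lambda>x. D x * indicat_real X x)"
    using integrable_real_mult_indicator[OF X D(2)] .
  define G where "G x = (D x - 1) * indicat_real X x" for x
  have G_nonneg: "AE x in M. 0 \<le> G x"
    by (intro AE_I2) (simp add: G_def X_def indicator_def)
  have int_G: "integrable M G"
    using int_DX int_X unfolding G_def by (simp add: left_diff_distrib)
  have "integral\<^sup>L M G = (\<integral>x. D x * indicat_real X x \<partial>M) - measure M X"
    using int_DX int_X X unfolding G_def by (simp add: left_diff_distrib)
  then have "integral\<^sup>L M G \<le> 0" using le[OF X] by simp
  then have "integral\<^sup>L M G = 0" using integral_nonneg_AE[OF G_nonneg] by simp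
  then have "AE x in M. G x = 0" using integral_nonneg_eq_0_iff_AE[OF int_G G_nonneg] by simp
  with AE_space show ?thesis by eventually_elim (auto simp: G_def X_def indicator_def split: if_splits)
qed

lemma bounded_density_of_measure_le:
  fixes M A :: "'a measure"
  assumes sets: "sets A = sets M" and fin: "finite_measure M" "finite_measure A"
    and le: "\<And>X. X \<in> sets M \<Longrightarrow> measure A X \<le> measure M X"
  obtains d where "d \<in> borel_measurable M" "\<And>x. 0 \<le> d x \<and> d x \<le> 1"
    "\<And>h :: 'a \<Rightarrow> real. h \<in> borel_measurable M \<Longrightarrow> integral\<^sup>L A h = (\<integral>x. d x * h x \<partial>M)"
proof -
  interpret M: finite_measure M by (rule fin(1))
  interpret A: finite_measure A by (rule fin(2))
  have ac: "absolutely_continuous M A"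
    unfolding absolutely_continuous_def
  proof
    fix X assume X: "X \<in> null_sets M"
    then have "X \<in> sets M" "measure M X = 0" by (auto simp: measure_def null_setsD1)
    then have "measure A X = 0" using le measure_nonneg[of A X] by (metis antisym)
    then show "X \<in> null_sets A"
      using \<open>X \<in> sets M\<close> sets by (simp add: A.emeasure_eq_measure null_setsI)
  qed
  define D where "D x = enn2real (RN_deriv M A x)" for x
  have D_meas: "D \<in> borel_measurable M"
    unfolding D_def by (intro borel_measurable_enn2real borel_measurable_RN_deriv)
  have D_integral: "integral\<^sup>L A h = (\<integral>x. D x * h x \<partial>M)" if "h \<in> borel_measurable M" for h :: "'a \<Rightarrow> real"
    unfolding D_def by (rule M.RN_deriv_integral[OF A.sigma_finite_measure_axioms ac sets that])
  have "integrable M (\<lambda>x. D x * 1)"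
    unfolding D_def using M.RN_deriv_integrable[OF A.sigma_finite_measure_axioms ac sets, of "\<lambda>x. 1"] by simp
  moreover have "(\<integral>x. D x * indicator X x \<partial>M) \<le> measure M X" if "X \<in> sets M" for X
  proof -
    have "(\<integral>x. D x * indicator X x \<partial>M) = integral\<^sup>L A (indicator X)"
      using D_integral[of "indicator X"] that by simp
    also have "\<dots> = measure A X" using that sets by simp
    finally show ?thesis using le[OF that] by simp
  qed
  ultimately have "AE x in M. D x \<le> 1"
    using D_meas by (intro AE_le_1_of_integral_indicator_le[OF fin(1)]) auto
  then have "integral\<^sup>L A h = (\<integral>x. min (D x) 1 * h x \<partial>M)" if "h \<in> borel_measurable M" for h :: "'a \<Rightarrow> real"
    unfolding D_integral[OF that] using D_meas that
    by (intro integral_cong_AE) (auto elim!: eventually_mono)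
  moreover have "(\<lambda>x. min (D x) 1) \<in> borel_measurable M" using D_meas by measurable
  moreover have "0 \<le> min (D x) 1 \<and> min (D x) 1 \<le> 1" for x by (simp add: D_def)
  ultimately show ?thesis using that by blast
qed

section \<open>Weak limits of weighted point masses\<close>

definition weighted_sums_converge ::
    "(nat \<Rightarrow> nat \<Rightarrow> 'a::metric_space) \<Rightarrow> (nat \<Rightarrow> nat \<Rightarrow> real) \<Rightarrow> (nat \<Rightarrow> nat) \<Rightarrow> 'a measure \<Rightarrow> ('a \<Rightarrow> real) \<Rightarrow> bool"
  where "weighted_sums_converge p w s M g \<longleftrightarrow> (\<forall>f. continuous_on UNIV f \<longrightarrow>
    (\<lambda>n. \<Sum>i<s n. w (s n) i * f (p (s n) i)) \<longlonglongrightarrow> (\<integral>y. g y * f y \<partial>M))"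

lemma weighted_sums_convergeD:
  "weighted_sums_converge p w s M g \<Longrightarrow> continuous_on UNIV f \<Longrightarrow>
    (\<lambda>n. \<Sum>i<s n. w (s n) i * f (p (s n) i)) \<longlonglongrightarrow> (\<integral>y. g y * f y \<partial>M)"
  unfolding weighted_sums_converge_def by blast

lemma weighted_sums_converge_subseq:
  assumes "weighted_sums_converge p w s M g" "strict_mono r"
  shows "weighted_sums_converge p w (s \<circ> r) M g"
  unfolding weighted_sums_converge_def
  using LIMSEQ_subseq_LIMSEQ[OF weighted_sums_convergeD[OF assms(1)] assms(2)] by (simp add: o_def)

lemma weighted_sums_converge_exists:
  fixes p :: "nat \<Rightarrow> nat \<Rightarrow> 'a::metric_space" and s :: "nat \<Rightarrow> nat"
  assumes "compact (UNIV :: 'a set)" "\<And>n i. 0 \<le> w n i" "\<And>n. (\<Sum>i<n. w n i) \<le> 1"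
  obtains r M where "strict_mono r" "sets M = sets borel" "finite_measure M"
    "weighted_sums_converge p w (s \<circ> r) M (\<lambda>_. 1)"
proof -
  interpret weighted_point_sequence "\<lambda>n. p (s n)" "\<lambda>n. w (s n)" s
    using assms by unfold_locales auto
  show ?thesis
    using weighted_sum_LIMSEQ
    by (intro that[OF strict_mono_diag sets_limit_measure finite_measure_limit_measure])
      (simp add: weighted_sums_converge_def)
qed

lemma integrable_bounded_density_scaleR:
  fixes h :: "'a::metric_space \<Rightarrow> 'b::{banach, second_countable_topology}"
  assumes "compact (UNIV :: 'a set)" "sets M = sets borel" "finite_measure M"
    and g: "g \<in> borel_measurable borel" "\<And>y. \<bar>g y\<bar> \<le> 1"
    and h: "continuous_on UNIV h"
  shows "integrable M (\<lambda>y. g y *\<^sub>R h y)"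
proof -
  obtain B where B: "\<And>y. norm (h y) \<le> B"
    using continuous_on_compact_UNIV_bound[OF assms(1) h] by blast
  have "norm (g y *\<^sub>R h y) \<le> B" for y
    using mult_mono[OF g(2) B, of y] by simp
  moreover have "g \<in> borel_measurable M" using g(1) measurable_cong_sets[OF assms(2) refl] by blast
  then have "(\<lambda>y. g y *\<^sub>R h y) \<in> borel_measurable M"
    using borel_measurable_continuous_on_UNIV[OF assms(2) h] by (rule borel_measurable_scaleR)
  ultimately show ?thesis by (intro integrable_bounded_measurable[OF assms(3)])
qed

lemma weighted_sums_converge_complex:
  fixes p :: "nat \<Rightarrow> nat \<Rightarrow> 'a::metric_space" and h :: "'a \<Rightarrow> complex"
  assumes "compact (UNIV :: 'a set)" "sets M = sets borel" "finite_measure M"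
    and conv: "weighted_sums_converge p u s M g"
    and g: "g \<in> borel_measurable borel" "\<And>y. \<bar>g y\<bar> \<le> 1"
    and h: "continuous_on UNIV h"
  shows "(\<lambda>n. \<Sum>i<s n. u (s n) i *\<^sub>R h (p (s n) i)) \<longlonglongrightarrow> (\<integral>y. g y *\<^sub>R h y \<partial>M)"
proof -
  have int: "integrable M (\<lambda>y. g y *\<^sub>R h y)"
    by (rule integrable_bounded_density_scaleR[OF assms(1-3) g h])
  have "(\<lambda>n. \<Sum>i<s n. u (s n) i * Re (h (p (s n) i))) \<longlonglongrightarrow> (\<integral>y. g y * Re (h y) \<partial>M)"
    "(\<lambda>n. \<Sum>i<s n. u (s n) i * Im (h (p (s n) i))) \<longlonglongrightarrow> (\<integral>y. g y * Im (h y) \<partial>M)"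
    using h by (auto intro!: weighted_sums_convergeD[OF conv] continuous_intros)
  then show ?thesis
    unfolding tendsto_complex_iff using integral_Re[OF int] integral_Im[OF int]
    by (simp add: Re_sum Im_sum)
qed

lemma weighted_sums_converge_dominated:
  fixes p :: "nat \<Rightarrow> nat \<Rightarrow> 'a::metric_space"
  assumes compact: "compact (UNIV :: 'a set)" and M: "sets M = sets borel" "finite_measure M"
    and w: "\<And>n. (\<Sum>i<n. w n i) \<le> 1" "weighted_sums_converge p w s M (\<lambda>_. 1)"
    and v: "\<And>n i. 0 \<le> v n i" "\<And>n i. v n i \<le> w n i"
  obtains r d where "strict_mono r" "d \<in> borel_measurable borel" "\<And>y. 0 \<le> d y \<and> d y \<le> 1"
    "weighted_sums_converge p v (s \<circ> r) M d"
proof -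
  have v_sum: "(\<Sum>i<n. v n i) \<le> 1" for n
    using sum_mono[of "{..<n}" "v n" "w n"] v(2) w(1)[of n] by fastforce
  have wv_sum: "(\<Sum>i<n. w n i - v n i) \<le> 1" for n
    using sum_mono[of "{..<n}" "\<lambda>i. w n i - v n i" "w n"] v(1) w(1)[of n] by fastforce
  have wv_nonneg: "0 \<le> w n i - v n i" for n i using v(2)[of n i] by simp
  obtain r1 MA where r1: "strict_mono r1"
    and MA: "sets MA = sets borel" "finite_measure MA" "weighted_sums_converge p v (s \<circ> r1) MA (\<lambda>_. 1)"
    by (rule weighted_sums_converge_exists[OF compact v(1) v_sum])
  obtain r2 MB where r2: "strict_mono r2"
    and MB: "sets MB = sets borel" "finite_measure MB"
      "weighted_sums_converge p (\<lambda>n i. w n i - v n i) (s \<circ> r1 \<circ> r2) MB (\<lambda>_. 1)"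
    by (rule weighted_sums_converge_exists[OF compact wv_nonneg wv_sum])
  note r = r1 r2
  let ?s = "s \<circ> r1 \<circ> r2"
  have "integral\<^sup>L MA f + integral\<^sup>L MB f = integral\<^sup>L M f" if "continuous_on UNIV f" for f :: "'a \<Rightarrow> real"
  proof -
    have "(\<lambda>n. \<Sum>i<?s n. w (?s n) i * f (p (?s n) i)) \<longlonglongrightarrow> integral\<^sup>L MA f + integral\<^sup>L MB f"
      using tendsto_add[OF weighted_sums_convergeD[OF weighted_sums_converge_subseq[OF MA(3) r(2)] that]
          weighted_sums_convergeD[OF MB(3) that]]
      by (simp add: o_def left_diff_distrib sum_subtractf)
    moreover have "(\<lambda>n. \<Sum>i<?s n. w (?s n) i * f (p (?s n) i)) \<longlonglongrightarrow> integral\<^sup>L M f"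
      using weighted_sums_convergeD[OF weighted_sums_converge_subseq[OF w(2) strict_mono_o[OF r]] that]
      by (simp add: o_assoc)
    ultimately show ?thesis by (rule LIMSEQ_unique)
  qed
  then have measure_sum: "measure MA X + measure MB X = measure M X" if "X \<in> sets M" for X
    using that M(1) by (intro measure_add_eq_of_integral_add_eq[OF MA(1) MB(1) M(1) MA(2) MB(2) M(2)]) auto
  have "measure MA X \<le> measure M X" if "X \<in> sets M" for X
    using measure_sum[OF that] measure_nonneg[of MB X] by linarith
  then obtain d where d: "d \<in> borel_measurable M" "\<And>x. 0 \<le> d x \<and> d x \<le> 1"
    "\<And>h :: 'a \<Rightarrow> real. h \<in> borel_measurable M \<Longrightarrow> integral\<^sup>L MA h = (\<integral>x. d x * h x \<partial>M)"
    using MA(1) M by (elim bounded_density_of_measure_le[of MA M, rotated -1]) (auto simp: MA(2))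
  have "weighted_sums_converge p v (s \<circ> (r1 \<circ> r2)) M d"
    using weighted_sums_convergeD[OF weighted_sums_converge_subseq[OF MA(3) r(2)]]
      d(3)[OF borel_measurable_continuous_on_UNIV[OF M(1)]]
    unfolding weighted_sums_converge_def by (simp add: o_assoc)
  moreover have "d \<in> borel_measurable borel" using d(1) measurable_cong_sets[OF M(1) refl] by blast
  ultimately show ?thesis using that[OF strict_mono_o[OF r]] d(2) by blast
qed

lemma weighted_sums_converge_signed:
  fixes p :: "nat \<Rightarrow> nat \<Rightarrow> 'a::metric_space"
  assumes compact: "compact (UNIV :: 'a set)" and M: "sets M = sets borel" "finite_measure M"
    and w: "\<And>n. (\<Sum>i<n. w n i) \<le> 1" "weighted_sums_converge p w s M (\<lambda>_. 1)"
    and u: "\<And>n i. \<bar>u n i\<bar> \<le> w n i"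
  obtains r g where "strict_mono r" "g \<in> borel_measurable borel" "\<And>y. \<bar>g y\<bar> \<le> 1"
    "weighted_sums_converge p u (s \<circ> r) M g"
proof -
  define v where "v n i = (w n i + u n i) / 2" for n i
  have "0 \<le> v n i" "v n i \<le> w n i" for n i using u[of n i] by (auto simp: v_def)
  then obtain r d where r: "strict_mono r" and d: "d \<in> borel_measurable borel" "\<And>y. 0 \<le> d y \<and> d y \<le> 1"
    and conv: "weighted_sums_converge p v (s \<circ> r) M d"
    using weighted_sums_converge_dominated[OF compact M w] by blast
  have "weighted_sums_converge p u (s \<circ> r) M (\<lambda>y. 2 * d y - 1)"
    unfolding weighted_sums_converge_def
  proof (intro allI impI)
    fix f :: "'a \<Rightarrow> real" assume f: "continuous_on UNIV f"
    have "\<bar>d y\<bar> \<le> 1" for y using d(2)[of y] by simp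
    then have int: "integrable M f" "integrable M (\<lambda>y. d y * f y)"
      using integrable_continuous_compact_UNIV[OF compact M f]
        integrable_bounded_density_scaleR[OF compact M d(1) _ f] by simp_all
    have "2 * (v N i * f (p N i)) = w N i * f (p N i) + u N i * f (p N i)" for N i
      by (simp add: v_def field_simps)
    then have sums: "(\<Sum>i<N. u N i * f (p N i))
        = 2 * (\<Sum>i<N. v N i * f (p N i)) - (\<Sum>i<N. w N i * f (p N i))" for N
      by (simp add: sum_distrib_left sum.distrib)
    have "(\<integral>y. (2 * d y - 1) * f y \<partial>M) = (\<integral>y. 2 * (d y * f y) - f y \<partial>M)"
      by (simp add: algebra_simps)
    also have "\<dots> = 2 * (\<integral>y. d y * f y \<partial>M) - (\<integral>y. 1 * f y \<partial>M)"
      using int by simp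
    finally have integral: "(\<integral>y. (2 * d y - 1) * f y \<partial>M) = 2 * (\<integral>y. d y * f y \<partial>M) - (\<integral>y. 1 * f y \<partial>M)" .
    show "(\<lambda>n. \<Sum>i<(s \<circ> r) n. u ((s \<circ> r) n) i * f (p ((s \<circ> r) n) i))
        \<longlonglongrightarrow> (\<integral>y. (2 * d y - 1) * f y \<partial>M)"
      unfolding sums integral
      by (intro tendsto_intros weighted_sums_convergeD[OF conv f]
          weighted_sums_convergeD[OF weighted_sums_converge_subseq[OF w(2) r] f])
  qed
  moreover have "(\<lambda>y. 2 * d y - 1) \<in> borel_measurable borel" using d(1) by measurable
  moreover have "\<bar>2 * d y - 1\<bar> \<le> 1" for y using d(2)[of y] by auto
  ultimately show ?thesis using that[OF r] by blast
qed

lemma complex_weighted_sums_converge: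
  fixes p :: "nat \<Rightarrow> nat \<Rightarrow> 'a::metric_space" and c :: "nat \<Rightarrow> nat \<Rightarrow> complex"
  assumes compact: "compact (UNIV :: 'a set)" and M: "sets M = sets borel" "finite_measure M"
    and w: "\<And>n. (\<Sum>i<n. w n i) \<le> 1" "weighted_sums_converge p w s M (\<lambda>_. 1)"
    and c: "\<And>n i. \<bar>Re (c n i)\<bar> \<le> w n i" "\<And>n i. \<bar>Im (c n i)\<bar> \<le> w n i"
  obtains r g where "strict_mono r" "g \<in> borel_measurable borel" "\<And>y. norm (g y) \<le> 2"
    "\<And>h. continuous_on UNIV h \<Longrightarrow>
      (\<lambda>n. \<Sum>i<(s \<circ> r) n. c ((s \<circ> r) n) i * h (p ((s \<circ> r) n) i)) \<longlonglongrightarrow> (\<integral>y. h y * g y \<partial>M)"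
proof -
  obtain r1 g1 where r1: "strict_mono r1" and g1: "g1 \<in> borel_measurable borel" "\<And>y. \<bar>g1 y\<bar> \<le> 1"
    and conv1: "weighted_sums_converge p (\<lambda>n i. Re (c n i)) (s \<circ> r1) M g1"
    using weighted_sums_converge_signed[OF compact M w c(1)] by blast
  obtain r2 g2 where r2: "strict_mono r2" and g2: "g2 \<in> borel_measurable borel" "\<And>y. \<bar>g2 y\<bar> \<le> 1"
    and conv2: "weighted_sums_converge p (\<lambda>n i. Im (c n i)) (s \<circ> r1 \<circ> r2) M g2"
    using weighted_sums_converge_signed[OF compact M w(1) weighted_sums_converge_subseq[OF w(2) r1] c(2)]
    by blast
  define g where "g y = complex_of_real (g1 y) + \<i> * complex_of_real (g2 y)" for y
  have "norm (g y) \<le> 2" for y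
    using norm_triangle_ineq[of "complex_of_real (g1 y)" "\<i> * complex_of_real (g2 y)"] g1(2)[of y] g2(2)[of y]
    by (simp add: g_def norm_mult)
  moreover have "g \<in> borel_measurable borel" unfolding g_def using g1(1) g2(1) by measurable
  moreover have "(\<lambda>n. \<Sum>i<(s \<circ> (r1 \<circ> r2)) n. c ((s \<circ> (r1 \<circ> r2)) n) i * h (p ((s \<circ> (r1 \<circ> r2)) n) i))
      \<longlonglongrightarrow> (\<integral>y. h y * g y \<partial>M)" if h: "continuous_on UNIV h" for h
  proof -
    let ?s = "s \<circ> r1 \<circ> r2"
    have lim1: "(\<lambda>n. \<Sum>i<?s n. Re (c (?s n) i) *\<^sub>R h (p (?s n) i)) \<longlonglongrightarrow> (\<integral>y. g1 y *\<^sub>R h y \<partial>M)"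
      by (rule weighted_sums_converge_complex[OF compact M weighted_sums_converge_subseq[OF conv1 r2] g1 h])
    have lim2: "(\<lambda>n. \<Sum>i<?s n. Im (c (?s n) i) *\<^sub>R h (p (?s n) i)) \<longlonglongrightarrow> (\<integral>y. g2 y *\<^sub>R h y \<partial>M)"
      by (rule weighted_sums_converge_complex[OF compact M conv2 g2 h])
    have int: "integrable M (\<lambda>y. g1 y *\<^sub>R h y)" "integrable M (\<lambda>y. g2 y *\<^sub>R h y)"
      using integrable_bounded_density_scaleR[OF compact M] g1 g2 h by blast+
    have "c n i * z = Re (c n i) *\<^sub>R z + \<i> * (Im (c n i) *\<^sub>R z)" for n i z
      by (simp add: complex_eq_iff)
    then have sums: "(\<Sum>i<N. c N i * h (p N i))
        = (\<Sum>i<N. Re (c N i) *\<^sub>R h (p N i)) + \<i> * (\<Sum>i<N. Im (c N i) *\<^sub>R h (p N i))" for N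
      by (simp only: sum.distrib sum_distrib_left)
    have "h y * g y = g1 y *\<^sub>R h y + \<i> * (g2 y *\<^sub>R h y)" for y
      by (simp add: g_def complex_eq_iff algebra_simps)
    then have integral: "(\<integral>y. h y * g y \<partial>M) = (\<integral>y. g1 y *\<^sub>R h y \<partial>M) + \<i> * (\<integral>y. g2 y *\<^sub>R h y \<partial>M)"
      using int by (simp only: Bochner_Integration.integral_add integrable_mult_right integral_mult_right_zero)
    show ?thesis
      unfolding sums integral o_assoc by (intro tendsto_intros lim1 lim2)
  qed
  ultimately show ?thesis using that[OF strict_mono_o[OF r1 r2]] by blast
qed

section \<open>Limits of the empirical measures\<close>

lemma emp_mu_eq_weighted_sum: "emp_mu xs N f = (\<Sum>i<N. (1 / real N) *\<^sub>R f (xs (Suc i)))"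
  unfolding emp_mu_def sum_atLeast1_atMost_eq_lessThan scaleR_conv_of_real sum_distrib_left by simp

lemma emp_nu_eq_weighted_sum: "emp_nu xs N phi f = (\<Sum>i<N. phi (xs (Suc i)) / of_nat N * f (xs (Suc i)))"
  unfolding emp_nu_def sum_atLeast1_atMost_eq_lessThan sum_distrib_left by (simp add: field_simps)

lemma emp_mu_shift:
  assumes N: "1 \<le> N" and traj: "\<And>i. 1 \<le> i \<Longrightarrow> i \<le> N - 1 \<Longrightarrow> xs (Suc i) = T (xs i)"
  shows "emp_mu xs N (f \<circ> T) - emp_mu xs N f = (f (T (xs N)) - f (xs 1)) / of_nat N"
proof -
  obtain M where M: "N = Suc M" using N by (cases N) auto
  define S where "S = (\<Sum>i<M. f (xs (Suc (Suc i))))"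
  have "(\<Sum>i<M. f (T (xs (Suc i)))) = S"
    unfolding S_def using traj M by (intro sum.cong) simp_all
  then have "emp_mu xs N (f \<circ> T) = (S + f (T (xs N))) / of_nat N"
    unfolding emp_mu_def sum_atLeast1_atMost_eq_lessThan M by simp
  moreover have "emp_mu xs N f = (f (xs 1) + S) / of_nat N"
    unfolding emp_mu_def sum_atLeast1_atMost_eq_lessThan M sum.lessThan_Suc_shift S_def by simp
  ultimately show ?thesis by (simp add: diff_divide_distrib[symmetric])
qed

lemma emp_nu_shift:
  assumes N: "1 \<le> N" and traj: "\<And>i. 1 \<le> i \<Longrightarrow> i \<le> N - 1 \<Longrightarrow> xs (Suc i) = T (xs i)"
    and inv: "\<And>y. Tinv (T y) = y"
    and shift: "\<And>i. 1 \<le> i \<Longrightarrow> i \<le> N - 1 \<Longrightarrow> phi (xs (Suc i)) = lam * phi (xs i)"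
  shows "emp_nu xs N phi (h \<circ> Tinv) - lam * emp_nu xs N phi h
    = (h (Tinv (xs 1)) * phi (xs 1) - lam * (h (xs N) * phi (xs N))) / of_nat N"
proof -
  obtain M where M: "N = Suc M" using N by (cases N) auto
  define S where "S = (\<Sum>i<M. h (xs (Suc i)) * phi (xs (Suc i)))"
  have "(\<Sum>i<M. h (Tinv (xs (Suc (Suc i)))) * phi (xs (Suc (Suc i)))) = lam * S"
    unfolding S_def sum_distrib_left using traj shift inv M by (intro sum.cong) simp_all
  then have "emp_nu xs N phi (h \<circ> Tinv) = (h (Tinv (xs 1)) * phi (xs 1) + lam * S) / of_nat N"
    unfolding emp_nu_def sum_atLeast1_atMost_eq_lessThan M sum.lessThan_Suc_shift by simp
  moreover have "emp_nu xs N phi h = (S + h (xs N) * phi (xs N)) / of_nat N"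
    unfolding emp_nu_def sum_atLeast1_atMost_eq_lessThan M S_def by simp
  ultimately show ?thesis by (simp add: diff_divide_distrib[symmetric] algebra_simps)
qed

lemma LIMSEQ_zero_of_norm_le_div:
  assumes "strict_mono R" "\<And>n. norm (D n) \<le> C / real (R n)"
  shows "D \<longlonglongrightarrow> 0"
proof (rule Lim_null_comparison[OF always_eventually])
  show "\<forall>n. norm (D n) \<le> C / real (R n)" using assms(2) by blast
  show "(\<lambda>n. C / real (R n)) \<longlonglongrightarrow> 0"
    using LIMSEQ_subseq_LIMSEQ[OF lim_const_over_n[of C] assms(1)] by (simp add: o_def)
qed

lemma eigen_relation_of_limits:
  fixes x :: "nat \<Rightarrow> nat \<Rightarrow> 'a::metric_space" and phi :: "nat \<Rightarrow> 'a \<Rightarrow> complex"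
  assumes compact: "compact (UNIV :: 'a set)" and Tinv: "continuous_on UNIV Tinv" "\<And>y. Tinv (T y) = y"
    and R: "strict_mono R"
    and traj: "\<And>N i. 1 \<le> N \<Longrightarrow> 1 \<le> i \<Longrightarrow> i \<le> N - 1 \<Longrightarrow> x N (Suc i) = T (x N i)"
    and shift: "\<And>N i. 1 \<le> N \<Longrightarrow> 1 \<le> i \<Longrightarrow> i \<le> N - 1 \<Longrightarrow> phi N (x N (Suc i)) = lam N * phi N (x N i)"
    and phi: "\<And>N y. 1 \<le> N \<Longrightarrow> norm (phi N y) \<le> 1"
    and lam: "Bseq lam" "(\<lambda>n. lam (R n)) \<longlonglongrightarrow> l"
    and conv: "\<And>f. continuous_on UNIV f \<Longrightarrow> (\<lambda>n. emp_nu (x (R n)) (R n) (phi (R n)) f) \<longlonglongrightarrow> L f"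
    and h: "continuous_on UNIV h"
  shows "L (h \<circ> Tinv) = l * L h"
proof -
  obtain B where B: "\<And>N. norm (lam N) \<le> B" using lam(1) by (rule BseqE) blast
  obtain C where h_bound: "\<And>y. norm (h y) \<le> C" using continuous_on_compact_UNIV_bound[OF compact h] by blast
  have "continuous_on UNIV (h \<circ> Tinv)" by (rule continuous_on_compose[OF Tinv(1) continuous_on_subset[OF h subset_UNIV]])
  define D where "D n = emp_nu (x (R n)) (R n) (phi (R n)) (h \<circ> Tinv)
      - lam (R n) * emp_nu (x (R n)) (R n) (phi (R n)) h" for n
  have "D \<longlonglongrightarrow> L (h \<circ> Tinv) - l * L h"
    unfolding D_def by (intro tendsto_intros conv lam(2) h \<open>continuous_on UNIV (h \<circ> Tinv)\<close>)
  moreover have "norm (D n) \<le> (C + B * C) / real (R n)" for n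
  proof (cases "R n = 0")
    case True then show ?thesis by (simp add: D_def emp_nu_def)
  next
    case False
    let ?N = "R n"
    have C: "0 \<le> C" "norm (h y * phi ?N y') \<le> C * 1" for y y'
      using h_bound[of y] phi[of ?N y'] False order.trans[OF norm_ge_zero h_bound]
      unfolding norm_mult by (auto intro: mult_mono[of _ C _ 1, simplified])
    have "norm (h (Tinv (x ?N 1)) * phi ?N (x ?N 1)) \<le> C * 1"
      "norm (lam ?N * (h (x ?N ?N) * phi ?N (x ?N ?N))) \<le> B * (C * 1)"
      using C(2) mult_mono[OF B C(2) order.trans[OF norm_ge_zero B] norm_ge_zero]
      unfolding norm_mult[of "lam _"] by blast+
    then have "norm (h (Tinv (x ?N 1)) * phi ?N (x ?N 1) - lam ?N * (h (x ?N ?N) * phi ?N (x ?N ?N)))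
        \<le> C + B * C"
      using norm_triangle_ineq4 by (smt (verit))
    then show ?thesis
      unfolding D_def using emp_nu_shift[of ?N "x ?N" T, OF _ traj Tinv(2) shift] False
      by (simp add: norm_divide divide_right_mono)
  qed
  then have "D \<longlonglongrightarrow> 0" by (rule LIMSEQ_zero_of_norm_le_div[OF R])
  ultimately show ?thesis using LIMSEQ_unique by fastforce
qed

lemma integral_comp_eq_of_limits:
  fixes x :: "nat \<Rightarrow> nat \<Rightarrow> 'a::metric_space" and f :: "'a \<Rightarrow> complex"
  assumes compact: "compact (UNIV :: 'a set)" and T: "continuous_on UNIV T" and R: "strict_mono R"
    and traj: "\<And>N i. 1 \<le> N \<Longrightarrow> 1 \<le> i \<Longrightarrow> i \<le> N - 1 \<Longrightarrow> x N (Suc i) = T (x N i)"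
    and conv: "\<And>f. continuous_on UNIV f \<Longrightarrow> (\<lambda>n. emp_mu (x (R n)) (R n) f) \<longlonglongrightarrow> L f"
    and f: "continuous_on UNIV f"
  shows "L (f \<circ> T) = L f"
proof -
  obtain B where B: "\<And>y. norm (f y) \<le> B" using continuous_on_compact_UNIV_bound[OF compact f] by blast
  define D where "D n = emp_mu (x (R n)) (R n) (f \<circ> T) - emp_mu (x (R n)) (R n) f" for n
  have "continuous_on UNIV (f \<circ> T)"
    by (rule continuous_on_compose[OF T continuous_on_subset[OF f subset_UNIV]])
  then have "D \<longlonglongrightarrow> L (f \<circ> T) - L f"
    unfolding D_def by (intro tendsto_diff conv f)
  moreover have "norm (D n) \<le> (B + B) / real (R n)" for n
  proof (cases "R n = 0")
    case True then show ?thesis by (simp add: D_def emp_mu_def)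
  next
    case False
    have "norm (f (T (x (R n) (R n))) - f (x (R n) 1)) \<le> B + B"
      using norm_triangle_ineq4 B by (smt (verit))
    then show ?thesis
      unfolding D_def using emp_mu_shift[of "R n" "x (R n)" T, OF _ traj] False
      by (simp add: norm_divide divide_right_mono)
  qed
  then have "D \<longlonglongrightarrow> 0" by (rule LIMSEQ_zero_of_norm_le_div[OF R])
  ultimately show ?thesis using LIMSEQ_unique by fastforce
qed

lemma invariant_measure_of_limits:
  fixes x :: "nat \<Rightarrow> nat \<Rightarrow> 'a::metric_space"
  assumes compact: "compact (UNIV :: 'a set)" and M: "sets M = sets borel" "finite_measure M"
    and T: "continuous_on UNIV T" and R: "strict_mono R"
    and traj: "\<And>N i. 1 \<le> N \<Longrightarrow> 1 \<le> i \<Longrightarrow> i \<le> N - 1 \<Longrightarrow> x N (Suc i) = T (x N i)"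
    and conv: "\<And>f :: 'a \<Rightarrow> complex. continuous_on UNIV f \<Longrightarrow>
      (\<lambda>n. emp_mu (x (R n)) (R n) f) \<longlonglongrightarrow> integral\<^sup>L M f"
  shows "distr M borel T = M"
proof (rule finite_measure_eqI_integral_continuous)
  have T_meas: "T \<in> M \<rightarrow>\<^sub>M borel" by (rule borel_measurable_continuous_on_UNIV[OF M(1) T])
  then show "finite_measure (distr M borel T)" by (rule finite_measure.finite_measure_distr[OF M(2)])
  fix f :: "'a \<Rightarrow> real" assume f: "continuous_on UNIV f"
  have "complex_of_real (integral\<^sup>L (distr M borel T) f) = complex_of_real (integral\<^sup>L M f)"
    using integral_comp_eq_of_limits[OF compact T R traj conv, of "\<lambda>y. complex_of_real (f y)"] f
      integral_distr[OF T_meas borel_measurable_continuous_onI[OF f]]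
    by (auto simp: o_def intro: continuous_intros)
  then show "integral\<^sup>L (distr M borel T) f = integral\<^sup>L M f" by simp
qed (use M in simp_all)

lemma L2_bounded:
  assumes "finite_measure M" "f \<in> borel_measurable M" "\<And>y. norm (f y) \<le> C"
  shows "L2 M f"
  unfolding L2_def
proof
  show "f \<in> borel_measurable M" by (rule assms(2))
  have "norm ((cmod (f y))\<^sup>2) \<le> C\<^sup>2" for y
    using assms(3)[of y] by (simp add: abs_le_square_iff power_mono)
  then show "integrable M (\<lambda>y. (cmod (f y))\<^sup>2)"
    using assms(2) by (intro integrable_bounded_measurable[OF assms(1)]) measurable
qed

text \<open>Since \<open>\<integral> k d\<nu> = \<integral> k g d\<mu>\<close> is the \<open>L\<^sub>2(\<mu>)\<close> pairing of \<open>k\<close> with \<open>cnj g\<close>, the adjoint moves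
  onto \<open>g\<close>: \<open>\<integral> K\<^sup>\<star> h d\<nu> = \<integral> (g \<circ> T) h d\<mu>\<close>, and this is \<open>\<integral> h \<circ> T\<^sup>-\<^sup>1 d\<nu>\<close> by \<open>T\<close>-invariance of \<open>\<mu>\<close>.\<close>

lemma koopman_adjoint_eigen_relation:
  fixes g h :: "'a::metric_space \<Rightarrow> complex"
  assumes M: "sets M = sets borel" "finite_measure M" and invariant: "distr M borel T = M"
    and T: "T \<in> borel_measurable borel" and Tinv: "Tinv \<in> borel_measurable borel" "\<And>y. Tinv (T y) = y"
    and g: "g \<in> borel_measurable borel" "\<And>y. norm (g y) \<le> C"
    and h: "h \<in> borel_measurable borel" "\<And>y. norm (h y) \<le> C'"
    and adj: "koopman_adjoint M T Ks"
    and eigen: "cbm_int M g (h \<circ> Tinv) = l * cbm_int M g h"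
  shows "cbm_int M g (Ks h) = l * cbm_int M g h"
proof -
  have meas: "f \<in> borel_measurable M" if "f \<in> borel_measurable borel" for f :: "'a \<Rightarrow> complex"
    using that measurable_cong_sets[OF M(1) refl] by blast
  have "(\<lambda>z. cnj z) \<in> borel_measurable borel"
    by (intro borel_measurable_continuous_onI continuous_intros)
  then have "(\<lambda>y. cnj (g y)) \<in> borel_measurable borel" using measurable_compose[OF g(1)] by blast
  then have "L2 M (\<lambda>y. cnj (g y))" using g(2) by (intro L2_bounded[OF M(2) meas, of _ C]) simp_all
  moreover have "L2 M h" by (rule L2_bounded[OF M(2) meas[OF h(1)] h(2)])
  ultimately have "(LINT y|M. cnj (g (T y)) * cnj (h y)) = (LINT y|M. cnj (g y) * cnj (Ks h y))"
    using adj unfolding koopman_adjoint_def by blast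
  moreover have "cnj (LINT y|M. cnj (g (T y)) * cnj (h y)) = (LINT y|M. g (T y) * h y)"
    by (subst Bochner_Integration.integral_cnj[symmetric]) simp
  moreover have "cnj (LINT y|M. cnj (g y) * cnj (Ks h y)) = (LINT y|M. g y * Ks h y)"
    by (subst Bochner_Integration.integral_cnj[symmetric]) simp
  ultimately have "(LINT y|M. g (T y) * h y) = (LINT y|M. g y * Ks h y)" by simp
  then have "cbm_int M g (Ks h) = (LINT y|M. g (T y) * h (Tinv (T y)))"
    unfolding cbm_int_def Tinv by (simp add: mult.commute)
  also have "\<dots> = (LINT z|distr M borel T. g z * h (Tinv z))"
  proof (rule integral_distr[symmetric])
    show "T \<in> M \<rightarrow>\<^sub>M borel" using T measurable_cong_sets[OF M(1) refl] by blast
    show "(\<lambda>z. g z * h (Tinv z)) \<in> borel_measurable borel"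
      using g(1) measurable_compose[OF Tinv(1) h(1)] by measurable
  qed
  also have "\<dots> = cbm_int M g (h \<circ> Tinv)"
    unfolding invariant cbm_int_def by (simp add: mult.commute)
  finally show ?thesis using eigen by simp
qed

lemma empirical_measures_converge:
  fixes x :: "nat \<Rightarrow> nat \<Rightarrow> 'a::metric_space" and phi :: "nat \<Rightarrow> 'a \<Rightarrow> complex" and lam :: "nat \<Rightarrow> complex"
  assumes compact: "compact (UNIV :: 'a set)" and phi: "\<And>N y. 1 \<le> N \<Longrightarrow> norm (phi N y) \<le> 1"
    and lam: "Bseq lam"
  obtains R M g l where "strict_mono R" "sets M = sets borel" "finite_measure M"
    "g \<in> borel_measurable borel" "\<And>y. norm (g y) \<le> 2"
    "\<And>f. continuous_on UNIV f \<Longrightarrow> (\<lambda>n. emp_nu (x (R n)) (R n) (phi (R n)) f) \<longlonglongrightarrow> cbm_int M g f"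
    "\<And>f. continuous_on UNIV f \<Longrightarrow> (\<lambda>n. emp_mu (x (R n)) (R n) f) \<longlonglongrightarrow> integral\<^sup>L M f"
    "(\<lambda>n. lam (R n)) \<longlonglongrightarrow> l"
proof -
  define p where "p N i = x N (Suc i)" for N i
  define w :: "nat \<Rightarrow> nat \<Rightarrow> real" where "w N i = 1 / real N" for N i
  define c where "c N i = phi N (p N i) / of_nat N" for N i
  \<comment> \<open>at \<open>N = 0\<close> both \<open>w\<close> and \<open>c\<close> vanish, since division by zero yields \<open>0\<close>\<close>
  have w_sum: "(\<Sum>i<N. w N i) \<le> 1" for N
    by (cases N) (simp_all add: w_def)
  have c_bound: "\<bar>Re (c N i)\<bar> \<le> w N i \<and> \<bar>Im (c N i)\<bar> \<le> w N i" for N i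
  proof (cases "N = 0")
    case False
    then have "\<bar>Re (phi N (p N i))\<bar> \<le> 1" "\<bar>Im (phi N (p N i))\<bar> \<le> 1"
      using phi[of N "p N i"] abs_Re_le_cmod abs_Im_le_cmod order_trans by fastforce+
    then show ?thesis by (simp add: c_def w_def divide_right_mono)
  qed (simp add: c_def w_def)
  obtain r0 M where r0: "strict_mono r0" and M: "sets M = sets borel" "finite_measure M"
    and conv_w: "weighted_sums_converge p w (id \<circ> r0) M (\<lambda>_. 1)"
    by (rule weighted_sums_converge_exists[OF compact _ w_sum]) (simp add: w_def)
  obtain r1 g where r1: "strict_mono r1" and g: "g \<in> borel_measurable borel" "\<And>y. norm (g y) \<le> 2"
    and conv_c: "\<And>h. continuous_on UNIV h \<Longrightarrow>
      (\<lambda>n. \<Sum>i<(id \<circ> r0 \<circ> r1) n. c ((id \<circ> r0 \<circ> r1) n) i * h (p ((id \<circ> r0 \<circ> r1) n) i))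
        \<longlonglongrightarrow> (\<integral>y. h y * g y \<partial>M)"
    using complex_weighted_sums_converge[OF compact M w_sum conv_w] c_bound by blast
  have "bounded (range (\<lambda>n. lam ((r0 \<circ> r1) n)))"
    using lam unfolding Bseq_eq_bounded by (rule bounded_subset) auto
  then obtain l r2 where r2: "strict_mono r2" and lam_conv: "((\<lambda>n. lam ((r0 \<circ> r1) n)) \<circ> r2) \<longlonglongrightarrow> l"
    using bounded_imp_convergent_subsequence by blast
  show ?thesis
  proof (rule that[of "r0 \<circ> r1 \<circ> r2"])
    show "strict_mono (r0 \<circ> r1 \<circ> r2)" by (intro strict_mono_o r0 r1 r2)
    show "(\<lambda>n. lam ((r0 \<circ> r1 \<circ> r2) n)) \<longlonglongrightarrow> l" using lam_conv by (simp add: o_def)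
  next
    fix f :: "'a \<Rightarrow> complex" assume f: "continuous_on UNIV f"
    show "(\<lambda>n. emp_nu (x ((r0 \<circ> r1 \<circ> r2) n)) ((r0 \<circ> r1 \<circ> r2) n) (phi ((r0 \<circ> r1 \<circ> r2) n)) f)
        \<longlonglongrightarrow> cbm_int M g f"
      using LIMSEQ_subseq_LIMSEQ[OF conv_c[OF f] r2]
      unfolding emp_nu_eq_weighted_sum cbm_int_def by (simp add: c_def p_def o_def)
    have "(\<lambda>n. \<Sum>i<(id \<circ> r0 \<circ> (r1 \<circ> r2)) n. w ((id \<circ> r0 \<circ> (r1 \<circ> r2)) n) i *\<^sub>R f (p ((id \<circ> r0 \<circ> (r1 \<circ> r2)) n) i))
        \<longlonglongrightarrow> (\<integral>y. 1 *\<^sub>R f y \<partial>M)"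
      using weighted_sums_converge_subseq[OF conv_w strict_mono_o[OF r1 r2]]
      by (intro weighted_sums_converge_complex[OF compact M _ _ _ f]) (auto simp: o_def)
    then show "(\<lambda>n. emp_mu (x ((r0 \<circ> r1 \<circ> r2) n)) ((r0 \<circ> r1 \<circ> r2) n) f) \<longlonglongrightarrow> integral\<^sup>L M f"
      unfolding emp_mu_eq_weighted_sum by (simp add: w_def p_def o_def)
  qed (use M g in auto)
qed

theorem theorem7:
  fixes T Tinv :: "'a::metric_space \<Rightarrow> 'a"
    and psi :: "nat \<Rightarrow> 'a \<Rightarrow> complex"
    and x :: "nat \<Rightarrow> nat \<Rightarrow> 'a"
    and lam :: "nat \<Rightarrow> complex"
    and phi :: "nat \<Rightarrow> 'a \<Rightarrow> complex"
  assumes compactM: "compact (UNIV :: 'a set)"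
    and homeo: "homeomorphism UNIV UNIV T Tinv"
    and psi_cont: "\<And>i. continuous_on UNIV (psi i)"
    and traj: "\<And>N i. 1 \<le> N \<Longrightarrow> 1 \<le> i \<Longrightarrow> i \<le> N - 1 \<Longrightarrow> x N (Suc i) = T (x N i)"
    and gram_inv: "\<And>N. 1 \<le> N \<Longrightarrow> invertible_cmat N (gram psi (x N) N)"
    and lam_bdd: "Bseq lam"
    and eigen: "\<And>N. 1 \<le> N \<Longrightarrow> \<exists>c. phi N = fspan psi N c
                   \<and> edmd_op psi T (x N) N c = (\<lambda>y. lam N * phi N y)"
    and normalized: "\<And>N. 1 \<le> N \<Longrightarrow> (SUP y. cmod (phi N y)) = 1"
  shows "\<exists>r rho g mu l.
     strict_mono r \<and> complex_borel_measure rho g \<and> sets mu = sets borel \<and> finite_measure mu \<and>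
     (\<forall>f. continuous_on UNIV f \<longrightarrow>
        (\<lambda>i. emp_nu (x (r i)) (r i) (phi (r i)) f) \<longlonglongrightarrow> cbm_int rho g f) \<and>
     (\<forall>f. continuous_on UNIV f \<longrightarrow>
        (\<lambda>i. emp_mu (x (r i)) (r i) f) \<longlonglongrightarrow> (LINT y|mu. f y)) \<and>
     (\<lambda>i. lam (r i)) \<longlonglongrightarrow> l \<and>
     (\<forall>h. continuous_on UNIV h \<longrightarrow> cbm_int rho g (h \<circ> Tinv) = l * cbm_int rho g h) \<and>
     (\<forall>f::'a \<Rightarrow> complex. continuous_on UNIV f \<longrightarrow> (LINT y|mu. f (T y)) = (LINT y|mu. f y)) \<and>
     (koopman_bounded mu T \<longrightarrow> (\<forall>Ks. koopman_adjoint mu T Ks \<longrightarrow>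
        (\<forall>h. continuous_on UNIV h \<longrightarrow> cbm_int rho g (Ks h) = l * cbm_int rho g h))) \<and>
     (l \<noteq> 0 \<longrightarrow> (\<forall>h. continuous_on UNIV h \<longrightarrow> cbm_int rho g (h \<circ> T) = (1 / l) * cbm_int rho g h))"
proof -
  have T: "continuous_on UNIV T" "continuous_on UNIV Tinv" "\<And>y. Tinv (T y) = y" "\<And>y. T (Tinv y) = y"
    using homeo unfolding homeomorphism_def by auto
  have phi: "\<And>y. norm (phi N y) \<le> 1"
    "\<And>i. 1 \<le> i \<Longrightarrow> i \<le> N - 1 \<Longrightarrow> phi N (x N (Suc i)) = lam N * phi N (x N i)" if "1 \<le> N" for N
    using edmd_eigenfunction_on_trajectory[OF compactM psi_cont traj[OF that] gram_inv[OF that]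
        eigen[OF that] normalized[OF that]] by blast+
  obtain R M g l where R: "strict_mono R" and M: "sets M = sets borel" "finite_measure M"
    and g: "g \<in> borel_measurable borel" "\<And>y. norm (g y) \<le> 2"
    and conv_nu: "\<And>f. continuous_on UNIV f \<Longrightarrow>
      (\<lambda>n. emp_nu (x (R n)) (R n) (phi (R n)) f) \<longlonglongrightarrow> cbm_int M g f"
    and conv_mu: "\<And>f. continuous_on UNIV f \<Longrightarrow> (\<lambda>n. emp_mu (x (R n)) (R n) f) \<longlonglongrightarrow> integral\<^sup>L M f"
    and conv_lam: "(\<lambda>n. lam (R n)) \<longlonglongrightarrow> l"
    using empirical_measures_converge[where x=x and phi=phi, OF compactM phi(1) lam_bdd] by blast
  have eigen_limit: "cbm_int M g (h \<circ> Tinv) = l * cbm_int M g h" if "continuous_on UNIV h" for h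
    using compactM T(2,3) R traj phi(2) phi(1) lam_bdd conv_lam conv_nu that
    by (rule eigen_relation_of_limits[where x=x and phi=phi and T=T])
  have invariant: "distr M borel T = M"
    by (rule invariant_measure_of_limits[OF compactM M T(1) R traj conv_mu])
  have "g \<in> borel_measurable M" using g(1) measurable_cong_sets[OF M(1) refl] by blast
  then have "integrable M g" by (rule integrable_bounded_measurable[OF M(2) _ g(2)])
  show ?thesis
  proof (intro exI[of _ R] exI[of _ M] exI[of _ g] exI[of _ M] exI[of _ l] conjI allI impI)
    show "complex_borel_measure M g" unfolding complex_borel_measure_def using M \<open>integrable M g\<close> by blast
    show "(LINT y|M. f (T y)) = (LINT y|M. f y)" if "continuous_on UNIV f" for f :: "'a \<Rightarrow> complex"
      using integral_distr[OF borel_measurable_continuous_on_UNIV[OF M(1) T(1)] borel_measurable_continuous_onI[OF that]]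
      unfolding invariant by simp
    show "cbm_int M g (Ks h) = l * cbm_int M g h"
      if adjoint: "koopman_adjoint M T Ks" and h: "continuous_on UNIV h" for Ks h
    proof -
      obtain C where "\<And>y. norm (h y) \<le> C" using continuous_on_compact_UNIV_bound[OF compactM h] by blast
      then show ?thesis
        using koopman_adjoint_eigen_relation[OF M invariant borel_measurable_continuous_onI[OF T(1)]
            borel_measurable_continuous_onI[OF T(2)] T(3) g borel_measurable_continuous_onI[OF h] _ adjoint
            eigen_limit[OF h]] by blast
    qed
    show "cbm_int M g (h \<circ> T) = 1 / l * cbm_int M g h" if "l \<noteq> 0" "continuous_on UNIV h" for h
      using eigen_limit[OF continuous_on_compose[OF T(1) continuous_on_subset[OF that(2) subset_UNIV]]] that(1)
      by (simp add: o_def T(4))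
  qed (simp_all add: R M conv_nu conv_mu conv_lam eigen_limit)
qed

end
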